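(* Under the Setting and Standing Assumptions below, let $(x^k,y^k)_{k\in\mathbb{N}}$ be generated by SPDHG and set $u^k=(x^{k+1},y^k)$. Then for every $j\in\{1,\dots,n\}$, $\mathbb{E}\|T_ju^k-u^k\|^2\to0$ as $k\to\infty$, and $T_ju^k-u^k\to0$ almost surely.
   Context: Setting. $X$ and $Y_1,\dots,Y_n$ are finite-dimensional real Hilbert spaces, $Y=\prod_{i=1}^n Y_i$ with the product inner product, $A_i:X\to Y_i$ are linear operators, and $A:X\to Y$, $Ax=(A_1x,\dots,A_nx)$, with adjoint $A^T y=\sum_i A_i^T y_i$. The functionals $g:X\to\mathbb{R}\cup\{\infty\}$ and $f_i:Y_i\to\mathbb{R}\cup\{\infty\}$ are convex, proper and lower semicontinuous; $f_i^*$ is the convex conjugate of $f_i$. Let $\mathcal{L}(x,y)=\sum_{i=1}^n (\langle A_ix,y_i\rangle - f_i^*(y_i)) + g(x)$. A saddle point is a pair $\hat w=(\hat x,\hat y)\in X\times Y$ with $\mathcal{L}(\hat x,y)\le\mathcal{L}(\hat x,\hat y)\le\mathcal{L}(x,\hat y)$ for all $x\in X$, $y\in Y$. For a functional $h$ and $\sigma>0$, $\mathrm{prox}_{\sigma h}(v)=\arg\min_u \tfrac12\|v-u\|^2+\sigma h(u)$. SPDHG: fix probabilities $p_1,\dots,p_n>0$ with $\sum_i p_i=1$, step sizes $\tau,\sigma_1,\dots,\sigma_n>0$, and $x^0\in X$; set $y^0=0\in Y$, $z^0=\bar z^0=0\in X$. For $k\ge0$: draw $j^k\in\{1,\dots,n\}$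 independently of the past with $\mathbb{P}(j^k=i)=p_i$; set $x^{k+1}=\mathrm{prox}_{\tau g}(x^k-\tau\bar z^k)$; $y_i^{k+1}=\mathrm{prox}_{\sigma_i f_i^*}(y_i^k+\sigma_iA_ix^{k+1})$ if $i=j^k$ and $y_i^{k+1}=y_i^k$ otherwise; $\delta^k=A_{j^k}^T(y^{k+1}_{j^k}-y^k_{j^k})$; $z^{k+1}=z^k+\delta^k$; $\bar z^{k+1}=z^{k+1}+p_{j^k}^{-1}\delta^k$. Standing Assumptions: the set of saddle points is nonempty, and $\tau\sigma_i\|A_i\|^2<p_i$ for every $i$. Operators $T_j$: for $j\in\{1,\dots,n\}$ and $w=(x,y_1,\dots,y_n)\in X\times Y$, $T_jw=((T_jw)_0,\dots,(T_jw)_n)$ with $(T_jw)_j=\mathrm{prox}_{\sigma_j f_j^*}(y_j+\sigma_jA_jx)$, $(T_jw)_i=y_i$ for $i\in\{1,\dots,n\}\setminus\{j\}$, and $(T_jw)_0=\mathrm{prox}_{\tau g}\big(x-\tau A^Ty-(1+p_j^{-1})\tau A_j^T((T_jw)_j-y_j)\big)$. *)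

theory Defs
  imports "HOL-Analysis.Analysis" "HOL-Probability.Probability"
begin

text \<open>Extended-real valued convex analysis relative to a carrier set S
  (S is a linear subspace modelling a finite-dimensional Hilbert space).\<close>

definition econvex_on :: "'a::real_vector set \<Rightarrow> ('a \<Rightarrow> ereal) \<Rightarrow> bool" where
  "econvex_on S h \<longleftrightarrow> convex S \<and>
     (\<forall>x\<in>S. \<forall>y\<in>S. \<forall>t::real. 0 < t \<and> t < 1 \<longrightarrow>
        h ((1 - t) *\<^sub>R x + t *\<^sub>R y) \<le> ereal (1 - t) * h x + ereal t * h y)"

definition eproper_on :: "'a set \<Rightarrow> ('a \<Rightarrow> ereal) \<Rightarrow> bool" where
  "eproper_on S h \<longleftrightarrow> (\<forall>x\<in>S. h x \<noteq> -\<infinity>) \<and> (\<exists>x\<in>S. h x \<noteq> \<infinity>)"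

text \<open>Lower semicontinuity (sequential, equivalent to topological in metric spaces),
  relative to S.\<close>
definition elsc_on :: "'a::metric_space set \<Rightarrow> ('a \<Rightarrow> ereal) \<Rightarrow> bool" where
  "elsc_on S h \<longleftrightarrow> (\<forall>x\<in>S. \<forall>s. (\<forall>k. s k \<in> S) \<and> s \<longlonglongrightarrow> x \<longrightarrow> h x \<le> liminf (\<lambda>k. h (s k)))"

definition conjugate :: "'a::real_inner set \<Rightarrow> ('a \<Rightarrow> ereal) \<Rightarrow> 'a \<Rightarrow> ereal" where
  "conjugate S h v = (SUP u\<in>S. ereal (v \<bullet> u) - h u)"

definition prox :: "'a::real_normed_vector set \<Rightarrow> real \<Rightarrow> ('a \<Rightarrow> ereal) \<Rightarrow> 'a \<Rightarrow> 'a" where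
  "prox S \<sigma> h v = (THE u. u \<in> S \<and>
     (\<forall>w\<in>S. ereal ((norm (v - u))\<^sup>2 / 2) + ereal \<sigma> * h u \<le> ereal ((norm (v - w))\<^sup>2 / 2) + ereal \<sigma> * h w))"

definition lagrangian ::
  "nat \<Rightarrow> (nat \<Rightarrow> 'y::real_inner set) \<Rightarrow> (nat \<Rightarrow> 'x \<Rightarrow> 'y) \<Rightarrow> (nat \<Rightarrow> 'y \<Rightarrow> ereal) \<Rightarrow> ('x \<Rightarrow> ereal)
    \<Rightarrow> 'x \<Rightarrow> (nat \<Rightarrow> 'y) \<Rightarrow> ereal" where
  "lagrangian n Y A f g x y =
     (\<Sum>i=1..n. ereal (A i x \<bullet> y i) - conjugate (Y i) (f i) (y i)) + g x"

definition saddle_point ::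
  "nat \<Rightarrow> (nat \<Rightarrow> 'y::real_inner set) \<Rightarrow> (nat \<Rightarrow> 'x \<Rightarrow> 'y) \<Rightarrow> (nat \<Rightarrow> 'y \<Rightarrow> ereal) \<Rightarrow> ('x \<Rightarrow> ereal)
    \<Rightarrow> 'x \<Rightarrow> (nat \<Rightarrow> 'y) \<Rightarrow> bool" where
  "saddle_point n Y A f g xh yh \<longleftrightarrow> (\<forall>i\<in>{1..n}. yh i \<in> Y i) \<and>
     (\<forall>x y. (\<forall>i\<in>{1..n}. y i \<in> Y i) \<longrightarrow>
        lagrangian n Y A f g xh y \<le> lagrangian n Y A f g xh yh \<and>
        lagrangian n Y A f g xh yh \<le> lagrangian n Y A f g x yh)"

text \<open>SPDHG iterates (x^k, y^k, z^k, zbar^k) driven by the index sequence js (js k = j^k).\<close>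
primrec spdhg ::
  "(nat \<Rightarrow> real) \<Rightarrow> real \<Rightarrow> (nat \<Rightarrow> real) \<Rightarrow> ('x::euclidean_space \<Rightarrow> ereal) \<Rightarrow> (nat \<Rightarrow> 'y::euclidean_space \<Rightarrow> ereal)
    \<Rightarrow> (nat \<Rightarrow> 'y set) \<Rightarrow> (nat \<Rightarrow> 'x \<Rightarrow> 'y) \<Rightarrow> 'x \<Rightarrow> (nat \<Rightarrow> nat) \<Rightarrow> nat
    \<Rightarrow> 'x \<times> (nat \<Rightarrow> 'y) \<times> 'x \<times> 'x" where
  "spdhg p \<tau> \<sigma> g f Y A x0 js 0 = (x0, (\<lambda>_. 0), 0, 0)"
| "spdhg p \<tau> \<sigma> g f Y A x0 js (Suc k) =
     (case spdhg p \<tau> \<sigma> g f Y A x0 js k of (x, y, z, zb) \<Rightarrow>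
       (let j = js k;
            x' = prox UNIV \<tau> g (x - \<tau> *\<^sub>R zb);
            y' = y(j := prox (Y j) (\<sigma> j) (conjugate (Y j) (f j)) (y j + \<sigma> j *\<^sub>R A j x'));
            \<delta> = adjoint (A j) (y' j - y j);
            z' = z + \<delta>
        in (x', y', z', z' + (1 / p j) *\<^sub>R \<delta>)))"

definition Top ::
  "nat \<Rightarrow> (nat \<Rightarrow> real) \<Rightarrow> real \<Rightarrow> (nat \<Rightarrow> real) \<Rightarrow> ('x::euclidean_space \<Rightarrow> ereal) \<Rightarrow> (nat \<Rightarrow> 'y::euclidean_space \<Rightarrow> ereal)
    \<Rightarrow> (nat \<Rightarrow> 'y set) \<Rightarrow> (nat \<Rightarrow> 'x \<Rightarrow> 'y) \<Rightarrow> nat \<Rightarrow> 'x \<times> (nat \<Rightarrow> 'y) \<Rightarrow> 'x \<times> (nat \<Rightarrow> 'y)" where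
  "Top n p \<tau> \<sigma> g f Y A j w =
     (case w of (x, y) \<Rightarrow>
       (let yj = prox (Y j) (\<sigma> j) (conjugate (Y j) (f j)) (y j + \<sigma> j *\<^sub>R A j x);
            x' = prox UNIV \<tau> g (x - \<tau> *\<^sub>R (\<Sum>i=1..n. adjoint (A i) (y i))
                   - ((1 + 1 / p j) * \<tau>) *\<^sub>R adjoint (A j) (yj - y j))
        in (x', y(j := yj))))"

definition sqnorm :: "nat \<Rightarrow> 'x::real_normed_vector \<times> (nat \<Rightarrow> 'y::real_normed_vector) \<Rightarrow> real" where
  "sqnorm n w = (norm (fst w))\<^sup>2 + (\<Sum>i=1..n. (norm (snd w i))\<^sup>2)"

definition wdiff :: "'x::ab_group_add \<times> (nat \<Rightarrow> 'y::ab_group_add) \<Rightarrow> 'x \<times> (nat \<Rightarrow> 'y) \<Rightarrow> 'x \<times> (nat \<Rightarrow> 'y)" where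
  "wdiff w v = (fst w - fst v, \<lambda>i. snd w i - snd v i)"

end

theory Submission
  imports Defs
begin

text \<open>
  Fix a saddle point (xh, yh). Its optimality conditions make xh and yh_i subgradient points of g
  and of the conjugates f_i^*, so the prox inequalities of one step u \<mapsto> T_j u, by monotonicity of
  the subdifferentials, show that the function
    V(x, y) = |x - xh|^2 / (2 \<tau>) + \<Sum>_i |y_i - yh_i|^2 / (2 \<sigma>_i p_i) + \<Sum>_i <A_i (x - xh), y_i - yh_i>
  satisfies \<Sum>_j p_j V(T_j u) + \<kappa> \<Sum>_j |T_j u - u|^2 \<le> V(u) for some \<kappa> > 0, and that V \<ge> 0;
  both use the step size condition \<tau> \<sigma>_i |A_i|^2 < p_i. The SPDHG iterates satisfy
  u^{k+1} = T_{j^k} u^k with j^k independent of u^k, hence E V(u^k) is nonincreasing and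
  \<Sum>_k E |T_j u^k - u^k|^2 \<le> E V(u^0) / \<kappa> < \<infinity>. So the expectations tend to 0, and by monotone
  convergence \<Sum>_k |T_j u^k - u^k|^2 is almost surely finite, so T_j u^k - u^k \<rightarrow> 0 almost surely.
\<close>

section \<open>Proper convex lower semicontinuous functions\<close>

lemma elsc_on_subset: "elsc_on S h \<Longrightarrow> K \<subseteq> S \<Longrightarrow> elsc_on K h"
  unfolding elsc_on_def by blast

lemma elsc_on_attains_min:
  fixes F :: "'a::metric_space \<Rightarrow> ereal"
  assumes K: "compact K" "K \<noteq> {}" and lsc: "elsc_on K F"
  shows "\<exists>x\<in>K. \<forall>y\<in>K. F x \<le> F y"
proof -
  obtain u where u: "\<forall>k. u k \<in> F ` K" and lim: "u \<longlonglongrightarrow> Inf (F ` K)"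
    using Inf_as_limit[of "F ` K"] K(2) by blast
  from u have "\<forall>k. \<exists>w. w \<in> K \<and> F w = u k"
    by (metis imageE)
  then obtain ws where ws: "\<And>k. ws k \<in> K" "\<And>k. F (ws k) = u k"
    by metis
  from K(1)[unfolded compact_eq_seq_compact_metric seq_compact_def] ws(1)
  obtain l r where l: "l \<in> K" "strict_mono r" "(ws \<circ> r) \<longlonglongrightarrow> l"
    by metis
  have "F l \<le> liminf (\<lambda>k. F ((ws \<circ> r) k))"
    using lsc l(1,3) ws(1) unfolding elsc_on_def by (simp add: o_def)
  also have "\<dots> = Inf (F ` K)"
    using LIMSEQ_subseq_LIMSEQ[OF lim l(2)] ws(2) by (simp add: o_def lim_imp_Liminf)
  finally have "F l \<le> F y" if "y \<in> K" for y
    using that by (meson INF_lower order_trans)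
  then show ?thesis
    using l(1) by blast
qed

definition epigraph_on :: "'a set \<Rightarrow> ('a \<Rightarrow> ereal) \<Rightarrow> ('a \<times> real) set" where
  "epigraph_on S h = {(x, r). x \<in> S \<and> h x \<le> ereal r}"

lemma convex_epigraph_on:
  assumes cv: "econvex_on S h"
  shows "convex (epigraph_on S h)"
  unfolding convex_alt
proof (intro ballI allI impI)
  fix p q :: "'a \<times> real" and t :: real
  assume p: "p \<in> epigraph_on S h" and q: "q \<in> epigraph_on S h" and t: "0 \<le> t \<and> t \<le> 1"
  have S: "convex S" using cv by (simp add: econvex_on_def)
  have inS: "(1 - t) *\<^sub>R fst p + t *\<^sub>R fst q \<in> S"
    using S p q t unfolding convex_alt epigraph_on_def by auto
  have "h ((1 - t) *\<^sub>R fst p + t *\<^sub>R fst q) \<le> ereal ((1 - t) * snd p + t * snd q)"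
  proof (cases "t = 0 \<or> t = 1")
    case True
    then show ?thesis using p q by (auto simp: epigraph_on_def)
  next
    case False
    then have t': "0 < t" "t < 1" using t by auto
    have "h ((1 - t) *\<^sub>R fst p + t *\<^sub>R fst q) \<le> ereal (1 - t) * h (fst p) + ereal t * h (fst q)"
      using cv p q t' unfolding econvex_on_def epigraph_on_def by auto
    also have "\<dots> \<le> ereal (1 - t) * ereal (snd p) + ereal t * ereal (snd q)"
      using p q t' by (intro add_mono ereal_mult_left_mono) (auto simp: epigraph_on_def)
    finally show ?thesis by simp
  qed
  then show "(1 - t) *\<^sub>R p + t *\<^sub>R q \<in> epigraph_on S h"
    using inS by (simp add: epigraph_on_def case_prod_beta)
qed

lemma closed_epigraph_on:
  assumes S: "closed S" and lsc: "elsc_on S h"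
  shows "closed (epigraph_on S h)"
  unfolding closed_sequential_limits
proof (intro allI impI)
  fix s l assume s: "(\<forall>k. s k \<in> epigraph_on S h) \<and> s \<longlonglongrightarrow> l"
  have l1: "(\<lambda>k. fst (s k)) \<longlonglongrightarrow> fst l" and l2: "(\<lambda>k. snd (s k)) \<longlonglongrightarrow> snd l"
    using s by (auto intro: tendsto_fst tendsto_snd)
  have inS: "fst l \<in> S"
    using closed_sequentially[OF S _ l1] s by (auto simp: epigraph_on_def case_prod_beta)
  have "h (fst l) \<le> liminf (\<lambda>k. h (fst (s k)))"
    using lsc inS l1 s unfolding elsc_on_def epigraph_on_def by (auto simp: case_prod_beta)
  also have "\<dots> \<le> liminf (\<lambda>k. ereal (snd (s k)))"
    using s by (intro Liminf_mono) (auto simp: epigraph_on_def case_prod_beta)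
  also have "\<dots> = ereal (snd l)"
    using l2 by (intro lim_imp_Liminf) auto
  finally show "l \<in> epigraph_on S h"
    using inS by (simp add: epigraph_on_def case_prod_beta)
qed

text \<open>Separating a point strictly below the graph from the closed convex epigraph yields a
  non-vertical hyperplane, i.e. an affine minorant.\<close>

lemma affine_minorant:
  fixes S :: "'a::euclidean_space set"
  assumes S: "closed S" and h: "econvex_on S h" "eproper_on S h" "elsc_on S h"
  shows "\<exists>\<beta> d. \<forall>x\<in>S. ereal (inner \<beta> x + d) \<le> h x"
proof -
  obtain x0 where "x0 \<in> S" "h x0 \<noteq> \<infinity>" "h x0 \<noteq> -\<infinity>"
    using h(2) unfolding eproper_on_def by blast
  then obtain r0 where x0: "x0 \<in> S" "h x0 = ereal r0"
    by (cases "h x0") auto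
  have "(x0, r0 - 1) \<notin> epigraph_on S h"
    using x0 by (simp add: epigraph_on_def)
  then obtain a b where ab: "inner a (x0, r0 - 1) < b" "\<forall>q\<in>epigraph_on S h. b < inner a q"
    using separating_hyperplane_closed_point[OF convex_epigraph_on[OF h(1)]
        closed_epigraph_on[OF S h(3)]] by blast
  obtain a1 a2 where a: "a = (a1, a2)" by (cases a)
  have "(x0, r0) \<in> epigraph_on S h"
    using x0 by (simp add: epigraph_on_def)
  then have "b < inner a1 x0 + a2 * r0" using ab a by force
  moreover have "inner a1 x0 + a2 * (r0 - 1) < b" using ab a by simp
  ultimately have a2: "a2 > 0" by (simp add: algebra_simps)
  have "ereal (inner (- (1 / a2) *\<^sub>R a1) x + b / a2) \<le> h x" if x: "x \<in> S" for x
  proof (cases "h x")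
    case (real r)
    then have "(x, r) \<in> epigraph_on S h" using x by (simp add: epigraph_on_def)
    then have "b < inner a1 x + a2 * r" using ab a by force
    then have "b / a2 - inner a1 x / a2 < r" using a2 by (simp add: field_simps)
    then show ?thesis using real by simp
  next
    case MInf
    then show ?thesis using h(2) x unfolding eproper_on_def by auto
  qed simp
  then show ?thesis by blast
qed

section \<open>Convex conjugates\<close>

lemma conjugate_ge:
  "u \<in> S \<Longrightarrow> h u = ereal r \<Longrightarrow> ereal (inner v u - r) \<le> conjugate S h v"
  unfolding conjugate_def by (rule SUP_upper2[of u]) auto

lemma conjugate_not_MInfty:
  assumes "eproper_on S h" "v \<in> S"
  shows "conjugate S h v \<noteq> -\<infinity>"
proof -
  obtain u where "u \<in> S" "h u \<noteq> \<infinity>" "h u \<noteq> -\<infinity>"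
    using assms(1) unfolding eproper_on_def by blast
  then obtain r where "u \<in> S" "h u = ereal r"
    by (cases "h u") auto
  then show ?thesis
    using conjugate_ge[of u S h r v] by auto
qed

lemma econvex_on_conjugate:
  assumes S: "subspace S" and h: "eproper_on S h"
  shows "econvex_on S (conjugate S h)"
  unfolding econvex_on_def
proof (intro conjI ballI allI impI)
  show "convex S" using S by (rule subspace_imp_convex)
  fix x y and t :: real assume x: "x \<in> S" and y: "y \<in> S" and t: "0 < t \<and> t < 1"
  show "conjugate S h ((1 - t) *\<^sub>R x + t *\<^sub>R y)
      \<le> ereal (1 - t) * conjugate S h x + ereal t * conjugate S h y"
    unfolding conjugate_def[of S h "(1 - t) *\<^sub>R x + t *\<^sub>R y"]
  proof (rule SUP_least)
    fix u assume u: "u \<in> S"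
    show "ereal (inner ((1 - t) *\<^sub>R x + t *\<^sub>R y) u) - h u
        \<le> ereal (1 - t) * conjugate S h x + ereal t * conjugate S h y"
    proof (cases "h u")
      case (real r)
      have "ereal (inner ((1 - t) *\<^sub>R x + t *\<^sub>R y) u) - h u
          = ereal (1 - t) * ereal (inner x u - r) + ereal t * ereal (inner y u - r)"
        using real by (simp add: inner_add_left algebra_simps)
      also have "\<dots> \<le> ereal (1 - t) * conjugate S h x + ereal t * conjugate S h y"
        using t conjugate_ge[of u S h r, OF u real] by (intro add_mono ereal_mult_left_mono) auto
      finally show ?thesis .
    next
      case MInf
      then show ?thesis using h u unfolding eproper_on_def by auto
    qed simp
  qed
qed

lemma elsc_on_conjugate:
  assumes h: "eproper_on S h"
  shows "elsc_on S (conjugate S h)"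
  unfolding elsc_on_def
proof (intro ballI allI impI)
  fix x s assume x: "x \<in> S" and s: "(\<forall>k. s k \<in> S) \<and> s \<longlonglongrightarrow> x"
  show "conjugate S h x \<le> liminf (\<lambda>k. conjugate S h (s k))"
    unfolding conjugate_def[of S h x]
  proof (rule SUP_least)
    fix u assume u: "u \<in> S"
    show "ereal (inner x u) - h u \<le> liminf (\<lambda>k. conjugate S h (s k))"
    proof (cases "h u")
      case (real r)
      have "(\<lambda>k. inner (s k) u - r) \<longlonglongrightarrow> inner x u - r"
        using s by (intro tendsto_intros) auto
      then have "ereal (inner x u - r) = liminf (\<lambda>k. ereal (inner (s k) u - r))"
        by (intro lim_imp_Liminf[symmetric]) auto
      also have "\<dots> \<le> liminf (\<lambda>k. conjugate S h (s k))"
        using conjugate_ge[of u S h r, OF u real] by (intro Liminf_mono) auto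
      finally show ?thesis using real by simp
    next
      case MInf
      then show ?thesis using h u unfolding eproper_on_def by auto
    qed simp
  qed
qed

text \<open>The affine minorant may be taken with slope in the subspace S; its slope is then a
  point where the conjugate is finite.\<close>

lemma eproper_on_conjugate:
  fixes S :: "'a::euclidean_space set"
  assumes S: "subspace S" and h: "econvex_on S h" "eproper_on S h" "elsc_on S h"
  shows "eproper_on S (conjugate S h)"
proof -
  obtain \<beta> d where \<beta>: "\<forall>x\<in>S. ereal (inner \<beta> x + d) \<le> h x"
    using affine_minorant[OF closed_subspace[OF S] h] by blast
  obtain c z where cz: "c \<in> span S" "\<And>w. w \<in> span S \<Longrightarrow> orthogonal z w" "\<beta> = c + z"
    using orthogonal_subspace_decomp_exists by blast
  have c: "c \<in> S" using cz(1) S by (metis span_eq_iff)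
  have "conjugate S h c \<le> ereal (- d)"
    unfolding conjugate_def
  proof (rule SUP_least)
    fix u assume u: "u \<in> S"
    have "inner \<beta> u = inner c u"
      using cz u by (simp add: inner_add_left orthogonal_def span_base)
    show "ereal (inner c u) - h u \<le> ereal (- d)"
    proof (cases "h u")
      case (real r)
      then show ?thesis using \<beta> u \<open>inner \<beta> u = inner c u\<close> by force
    next
      case MInf
      then show ?thesis using h(2) u unfolding eproper_on_def by auto
    qed simp
  qed
  then have "conjugate S h c \<noteq> \<infinity>"
    by auto
  then show ?thesis
    using c conjugate_not_MInfty[OF h(2)] unfolding eproper_on_def by blast
qed

section \<open>Proximal points\<close>

definition prox_objective :: "real \<Rightarrow> ('a::real_normed_vector \<Rightarrow> ereal) \<Rightarrow> 'a \<Rightarrow> 'a \<Rightarrow> ereal" where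
  "prox_objective \<sigma> h v w = ereal ((norm (v - w))\<^sup>2 / 2) + ereal \<sigma> * h w"

lemma elsc_on_prox_objective:
  assumes \<sigma>: "\<sigma> \<ge> 0" and lsc: "elsc_on S h"
  shows "elsc_on S (prox_objective \<sigma> h v)"
  unfolding elsc_on_def
proof (intro ballI allI impI)
  fix x s assume x: "x \<in> S" and s: "(\<forall>k. s k \<in> S) \<and> s \<longlonglongrightarrow> x"
  have q: "(\<lambda>k. ereal ((norm (v - s k))\<^sup>2 / 2)) \<longlonglongrightarrow> ereal ((norm (v - x))\<^sup>2 / 2)"
    using s by (intro tendsto_intros) auto
  have "h x \<le> liminf (\<lambda>k. h (s k))"
    using lsc x s unfolding elsc_on_def by blast
  then have "ereal \<sigma> * h x \<le> liminf (\<lambda>k. ereal \<sigma> * h (s k))"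
    using \<sigma> by (simp add: Liminf_ereal_mult_left ereal_mult_left_mono)
  moreover have "liminf (\<lambda>k. prox_objective \<sigma> h v (s k))
      = ereal ((norm (v - x))\<^sup>2 / 2) + liminf (\<lambda>k. ereal \<sigma> * h (s k))"
    unfolding prox_objective_def by (rule ereal_liminf_lim_add[OF q]) simp
  ultimately show "prox_objective \<sigma> h v x \<le> liminf (\<lambda>k. prox_objective \<sigma> h v (s k))"
    unfolding prox_objective_def by (simp add: add_left_mono)
qed

lemma quadratic_sublevel_bound:
  fixes r B K :: real
  assumes "r \<ge> 0" "B \<ge> 0" "r\<^sup>2 / 2 - B * r \<le> K"
  shows "r \<le> max 1 (2 * \<bar>K\<bar> + 2 * B)"
proof (cases "r \<le> 1")
  case False
  then have "r * r / 2 \<le> (\<bar>K\<bar> + B) * r"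
    using assms by (simp add: power2_eq_square algebra_simps) (smt (verit) mult_le_cancel_right1)
  then have "r / 2 \<le> \<bar>K\<bar> + B"
    using False by (smt (verit, best) divide_le_eq mult.commute mult_le_cancel_left_pos times_divide_eq_left)
  then show ?thesis by simp
qed simp

lemma prox_objective_ge_quadratic:
  assumes \<sigma>: "\<sigma> > 0" and minor: "\<forall>w\<in>S. ereal (inner \<beta> w + d) \<le> h w" and w: "w \<in> S"
  shows "ereal ((norm (v - w))\<^sup>2 / 2 - \<sigma> * norm \<beta> * norm (v - w) + \<sigma> * (d - norm \<beta> * norm v))
    \<le> prox_objective \<sigma> h v w"
proof -
  have "- (norm \<beta> * norm w) \<le> inner \<beta> w"
    using Cauchy_Schwarz_ineq2[of \<beta> w] by (simp add: abs_le_iff)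
  moreover have "norm \<beta> * norm w \<le> norm \<beta> * (norm v + norm (v - w))"
    using norm_triangle_sub[of w v] by (intro mult_left_mono) (auto simp: norm_minus_commute)
  ultimately have "d - norm \<beta> * (norm v + norm (v - w)) \<le> inner \<beta> w + d"
    by linarith
  then have "ereal (\<sigma> * (d - norm \<beta> * (norm v + norm (v - w)))) \<le> ereal \<sigma> * ereal (inner \<beta> w + d)"
    using \<sigma> by (simp add: mult_left_mono)
  also have "\<dots> \<le> ereal \<sigma> * h w"
    using minor w \<sigma> by (intro ereal_mult_left_mono) auto
  finally have "ereal (\<sigma> * (d - norm \<beta> * (norm v + norm (v - w)))) \<le> ereal \<sigma> * h w" .
  then have "ereal ((norm (v - w))\<^sup>2 / 2) + ereal (\<sigma> * (d - norm \<beta> * (norm v + norm (v - w))))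
      \<le> prox_objective \<sigma> h v w"
    unfolding prox_objective_def by (rule add_left_mono)
  then show ?thesis
    by (simp add: algebra_simps)
qed

lemma prox_objective_sublevel_bounded:
  assumes \<sigma>: "\<sigma> > 0" and minor: "\<forall>w\<in>S. ereal (inner \<beta> w + d) \<le> h w"
  shows "\<exists>R. \<forall>w\<in>S. prox_objective \<sigma> h v w \<le> ereal c \<longrightarrow> norm (v - w) \<le> R"
proof -
  define B where "B = \<sigma> * norm \<beta>"
  define C where "C = \<sigma> * (d - norm \<beta> * norm v)"
  have B: "B \<ge> 0"
    using \<sigma> by (simp add: B_def)
  have "norm (v - w) \<le> max 1 (2 * \<bar>c - C\<bar> + 2 * B)"
    if "w \<in> S" "prox_objective \<sigma> h v w \<le> ereal c" for w
  proof -
    have "(norm (v - w))\<^sup>2 / 2 - B * norm (v - w) \<le> c - C"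
      using order_trans[OF prox_objective_ge_quadratic[OF \<sigma> minor that(1)] that(2)]
      by (simp add: B_def C_def)
    then show ?thesis
      using quadratic_sublevel_bound[OF norm_ge_zero B] by (simp add: B_def)
  qed
  then show ?thesis
    by blast
qed

text \<open>By coercivity, the minimum over S is attained inside a ball around v, which is compact.\<close>

lemma prox_objective_attains_min:
  fixes S :: "'a::euclidean_space set"
  assumes \<sigma>: "\<sigma> > 0" and S: "closed S" and lsc: "elsc_on S h"
    and w0: "w0 \<in> S" "h w0 \<noteq> \<infinity>" and minor: "\<forall>w\<in>S. ereal (inner \<beta> w + d) \<le> h w"
  shows "\<exists>u\<in>S. \<forall>w\<in>S. prox_objective \<sigma> h v u \<le> prox_objective \<sigma> h v w"
proof -
  obtain b0 where "h w0 = ereal b0"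
    using w0 minor by (cases "h w0") force+
  then obtain c0 where c0: "prox_objective \<sigma> h v w0 = ereal c0"
    by (simp add: prox_objective_def)
  obtain R where R: "\<And>w. w \<in> S \<Longrightarrow> prox_objective \<sigma> h v w \<le> ereal c0 \<Longrightarrow> norm (v - w) \<le> R"
    using prox_objective_sublevel_bounded[OF \<sigma> minor] by blast
  let ?K = "S \<inter> cball v R"
  have w0K: "w0 \<in> ?K"
    using w0(1) R[OF w0(1)] c0 by (simp add: dist_norm)
  have K: "compact ?K" "?K \<noteq> {}"
    using S w0K by (auto simp: compact_Int_closed)
  have "elsc_on S (prox_objective \<sigma> h v)"
    using \<sigma> lsc by (intro elsc_on_prox_objective) auto
  then have "elsc_on ?K (prox_objective \<sigma> h v)"
    by (rule elsc_on_subset) blast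
  then obtain u where u: "u \<in> ?K" and min: "\<forall>w\<in>?K. prox_objective \<sigma> h v u \<le> prox_objective \<sigma> h v w"
    using elsc_on_attains_min[OF K] by blast
  have u_w0: "prox_objective \<sigma> h v u \<le> ereal c0"
    using min w0K c0 by (metis (no_types, lifting))
  have "prox_objective \<sigma> h v u \<le> prox_objective \<sigma> h v w" if w: "w \<in> S" for w
  proof (cases "w \<in> cball v R")
    case True
    then show ?thesis
      using min w by blast
  next
    case False
    then have "ereal c0 < prox_objective \<sigma> h v w"
      using R[OF w] by (force simp: dist_norm)
    then show ?thesis
      using u_w0 by simp
  qed
  then show ?thesis
    using u by blast
qed

lemma le_of_forall_le_mult_add:
  fixes X N D :: real
  assumes N: "N \<ge> 0" and le: "\<And>t. 0 < t \<Longrightarrow> t < 1 \<Longrightarrow> X \<le> t * N + D"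
  shows "X \<le> D"
proof (rule ccontr)
  assume "\<not> X \<le> D"
  define t where "t = min (1/2) ((X - D) / (N + 1))"
  have t: "0 < t" "t < 1"
    using \<open>\<not> X \<le> D\<close> N by (auto simp: t_def)
  have "t \<le> (X - D) / (N + 1)"
    by (simp add: t_def)
  then have "t * (N + 1) \<le> X - D"
    using N by (simp add: field_simps)
  then have "t * N + D < X"
    using t(1) by (simp add: algebra_simps)
  with le[OF t(1,2)] show False
    by linarith
qed

lemma norm_diff_scaleR_square:
  fixes a b :: "'a::real_inner"
  shows "(norm (a - t *\<^sub>R b))\<^sup>2 = (norm a)\<^sup>2 - 2 * t * inner a b + t\<^sup>2 * (norm b)\<^sup>2"
  unfolding power2_norm_eq_inner
  by (simp add: inner_diff_left inner_diff_right algebra_simps power2_eq_square inner_commute)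

text \<open>Comparison of the minimiser u with (1 - t) u + t w; as t tends to 0 this becomes the
  first-order condition of the minimisation.\<close>

lemma prox_objective_min_segment:
  fixes S :: "'a::real_inner set"
  assumes \<sigma>: "\<sigma> > 0" and cv: "econvex_on S h" and nm: "\<forall>x\<in>S. h x \<noteq> -\<infinity>"
    and u: "u \<in> S" "h u = ereal a"
    and min: "\<forall>w\<in>S. prox_objective \<sigma> h v u \<le> prox_objective \<sigma> h v w"
    and w: "w \<in> S" "h w = ereal b" and t: "0 < t" "t < 1"
  shows "inner (v - u) (w - u) \<le> t * ((norm (w - u))\<^sup>2 / 2) + \<sigma> * (b - a)"
proof -
  define ut where "ut = (1 - t) *\<^sub>R u + t *\<^sub>R w"
  have ut: "ut \<in> S"
    using cv u(1) w(1) t unfolding econvex_on_def convex_def ut_def by auto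
  have "h ut \<le> ereal (1 - t) * h u + ereal t * h w"
    using cv u(1) w(1) t unfolding econvex_on_def ut_def by blast
  then have hut: "h ut \<le> ereal ((1 - t) * a + t * b)"
    using u w by simp
  obtain c where c: "h ut = ereal c"
    using nm ut hut by (cases "h ut") auto
  have "prox_objective \<sigma> h v u \<le> prox_objective \<sigma> h v ut"
    using min ut by blast
  then have m: "(norm (v - u))\<^sup>2 / 2 + \<sigma> * a \<le> (norm (v - ut))\<^sup>2 / 2 + \<sigma> * c"
    using u c by (simp add: prox_objective_def)
  have "v - ut = (v - u) - t *\<^sub>R (w - u)"
    by (simp add: ut_def algebra_simps)
  then have e: "(norm (v - ut))\<^sup>2 = (norm (v - u))\<^sup>2 - 2 * t * inner (v - u) (w - u) + t\<^sup>2 * (norm (w - u))\<^sup>2"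
    by (metis norm_diff_scaleR_square)
  have "\<sigma> * c \<le> \<sigma> * ((1 - t) * a + t * b)"
    using hut c \<sigma> by (simp add: mult_left_mono)
  then have "t * inner (v - u) (w - u) \<le> t * (t * ((norm (w - u))\<^sup>2 / 2) + \<sigma> * (b - a))"
    using m e by (simp add: algebra_simps power2_eq_square)
  then show ?thesis
    using t by simp
qed

lemma prox_objective_min_variational:
  fixes S :: "'a::real_inner set"
  assumes \<sigma>: "\<sigma> > 0" and cv: "econvex_on S h" and nm: "\<forall>x\<in>S. h x \<noteq> -\<infinity>"
    and u: "u \<in> S" "h u = ereal a"
    and min: "\<forall>w\<in>S. prox_objective \<sigma> h v u \<le> prox_objective \<sigma> h v w"
    and w: "w \<in> S"
  shows "ereal (a + inner (v - u) (w - u) / \<sigma>) \<le> h w"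
proof (cases "h w")
  case (real b)
  have "inner (v - u) (w - u) \<le> \<sigma> * (b - a)"
    using le_of_forall_le_mult_add[OF _ prox_objective_min_segment[OF \<sigma> cv nm u min w real]] by simp
  then show ?thesis
    using real \<sigma> by (simp add: field_simps)
next
  case MInf
  then show ?thesis
    using nm w by simp
qed simp

lemma prox_objective_min_finite:
  assumes \<sigma>: "\<sigma> > 0" and nm: "\<forall>x\<in>S. h x \<noteq> -\<infinity>" and w0: "w0 \<in> S" "h w0 \<noteq> \<infinity>"
    and u: "u \<in> S" and min: "\<forall>w\<in>S. prox_objective \<sigma> h v u \<le> prox_objective \<sigma> h v w"
  shows "\<exists>a. h u = ereal a"
proof -
  have "h u \<noteq> \<infinity>"
  proof
    assume "h u = \<infinity>"
    then have "prox_objective \<sigma> h v u = \<infinity>"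
      using \<sigma> by (simp add: prox_objective_def)
    moreover have "prox_objective \<sigma> h v w0 \<noteq> \<infinity>"
      using w0 nm \<sigma> by (cases "h w0") (auto simp: prox_objective_def)
    moreover have "prox_objective \<sigma> h v u \<le> prox_objective \<sigma> h v w0"
      using min w0(1) by blast
    ultimately show False
      by simp
  qed
  then show ?thesis
    using nm u by (cases "h u") auto
qed

lemma variational_inequality_unique:
  assumes \<sigma>: "\<sigma> > 0" and u: "u \<in> S" "h u = ereal a" and u': "u' \<in> S" "h u' = ereal a'"
    and var: "\<forall>w\<in>S. ereal (a + inner (v - u) (w - u) / \<sigma>) \<le> h w"
    and var': "\<forall>w\<in>S. ereal (a' + inner (v - u') (w - u') / \<sigma>) \<le> h w"
  shows "u' = u"
proof -
  have "a + inner (v - u) (u' - u) / \<sigma> \<le> a'" "a' + inner (v - u') (u - u') / \<sigma> \<le> a"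
    using u u' var var' by force+
  then have "(inner (v - u) (u' - u) + inner (v - u') (u - u')) / \<sigma> \<le> 0"
    by (simp add: add_divide_distrib)
  moreover have "inner (v - u) (u' - u) + inner (v - u') (u - u') = (norm (u - u'))\<^sup>2"
    by (simp add: power2_norm_eq_inner inner_diff_left inner_diff_right inner_commute)
  ultimately show ?thesis
    using \<sigma> by (simp add: divide_le_0_iff)
qed

lemma prox_characterization:
  fixes S :: "'a::euclidean_space set" and v :: 'a
  assumes \<sigma>: "\<sigma> > 0" and S: "closed S"
    and h: "econvex_on S h" "eproper_on S h" "elsc_on S h"
  defines "u \<equiv> prox S \<sigma> h v"
  shows "u \<in> S \<and> (\<exists>a. h u = ereal a \<and> (\<forall>w\<in>S. ereal (a + inner (v - u) (w - u) / \<sigma>) \<le> h w))"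
proof -
  let ?P = "\<lambda>u. u \<in> S \<and> (\<forall>w\<in>S. prox_objective \<sigma> h v u \<le> prox_objective \<sigma> h v w)"
  have nm: "\<forall>x\<in>S. h x \<noteq> -\<infinity>"
    using h(2) unfolding eproper_on_def by auto
  obtain w0 where w0: "w0 \<in> S" "h w0 \<noteq> \<infinity>"
    using h(2) unfolding eproper_on_def by auto
  have variational: "\<exists>a. h u = ereal a \<and> (\<forall>w\<in>S. ereal (a + inner (v - u) (w - u) / \<sigma>) \<le> h w)"
    if "?P u" for u
    using prox_objective_min_finite[OF \<sigma> nm w0] prox_objective_min_variational[OF \<sigma> h(1) nm] that
    by blast
  obtain \<beta> d where "\<forall>w\<in>S. ereal (inner \<beta> w + d) \<le> h w"
    using affine_minorant[OF S h] by blast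
  then obtain u0 where u0: "?P u0"
    using prox_objective_attains_min[OF \<sigma> S h(3) w0] by blast
  have "u' = u0" if "?P u'" for u'
    using variational[OF u0] variational[OF that] u0 that variational_inequality_unique[OF \<sigma>] by metis
  then have "u = u0"
    unfolding u_def prox_def prox_objective_def[symmetric] by (rule the_equality[where P = ?P, OF u0])
  then show ?thesis
    using u0 variational[OF u0] by simp
qed

text \<open>The first-order condition at u combined with the subgradient inequality at w0
  (monotonicity of the subdifferential).\<close>

lemma prox_three_point:
  fixes S :: "'a::euclidean_space set" and x s :: 'a
  assumes \<sigma>: "\<sigma> > 0" and S: "closed S"
    and h: "econvex_on S h" "eproper_on S h" "elsc_on S h"
    and w0: "w0 \<in> S" "h w0 \<noteq> \<infinity>" and subgrad: "\<forall>w\<in>S. h w0 + ereal (inner s0 (w - w0)) \<le> h w"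
  defines "u \<equiv> prox S \<sigma> h (x - \<sigma> *\<^sub>R s)"
  shows "2 * \<sigma> * inner (s + s0) (u - w0) + (norm (u - w0))\<^sup>2 + (norm (u - x))\<^sup>2 \<le> (norm (x - w0))\<^sup>2"
proof -
  obtain a where u: "u \<in> S" "h u = ereal a"
    and var: "\<forall>w\<in>S. ereal (a + inner (x - \<sigma> *\<^sub>R s - u) (w - u) / \<sigma>) \<le> h w"
    using prox_characterization[OF \<sigma> S h, of "x - \<sigma> *\<^sub>R s"] unfolding u_def by blast
  obtain a0 where a0: "h w0 = ereal a0"
    using w0 h(2) unfolding eproper_on_def by (cases "h w0") auto
  have "a + inner (x - \<sigma> *\<^sub>R s - u) (w0 - u) / \<sigma> \<le> a0"
    using var w0(1) a0 by force
  moreover have "a0 + inner s0 (u - w0) \<le> a"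
    using subgrad u a0 by force
  ultimately have "inner (x - \<sigma> *\<^sub>R s - u) (w0 - u) / \<sigma> + inner s0 (u - w0) \<le> 0"
    by linarith
  then have "\<sigma> * (inner (x - \<sigma> *\<^sub>R s - u) (w0 - u) / \<sigma> + inner s0 (u - w0)) \<le> 0"
    using \<sigma> by (simp add: mult_nonneg_nonpos)
  then have "inner (x - \<sigma> *\<^sub>R s - u) (u - w0) \<ge> \<sigma> * inner s0 (u - w0)"
    using \<sigma> by (simp add: distrib_left inner_diff_right)
  moreover have "2 * inner (x - u) (u - w0) = (norm (x - w0))\<^sup>2 - (norm (u - w0))\<^sup>2 - (norm (u - x))\<^sup>2"
    by (simp add: power2_norm_eq_inner inner_diff_left inner_diff_right inner_commute)
  ultimately show ?thesis
    by (simp add: inner_diff_left inner_add_left algebra_simps)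
qed

section \<open>The saddle point problem\<close>

lemma sum_eq_sum_except_one:
  fixes a b :: "'i \<Rightarrow> 'c::ab_group_add"
  assumes "finite S" "i \<in> S" "\<And>k. k \<in> S \<Longrightarrow> k \<noteq> i \<Longrightarrow> a k = b k"
  shows "sum a S = sum b S + a i - b i"
proof -
  have "sum a S = a i + sum a (S - {i})" "sum b S = b i + sum b (S - {i})"
    using sum.remove[OF assms(1,2)] by blast+
  moreover have "sum a (S - {i}) = sum b (S - {i})"
    using assms(3) by (intro sum.cong) auto
  ultimately show ?thesis
    by simp
qed

locale spdhg_setting =
  fixes n :: nat and p \<sigma> :: "nat \<Rightarrow> real" and \<tau> :: real
    and g :: "'x::euclidean_space \<Rightarrow> ereal" and f :: "nat \<Rightarrow> 'y::euclidean_space \<Rightarrow> ereal"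
    and Y :: "nat \<Rightarrow> 'y set" and A :: "nat \<Rightarrow> 'x \<Rightarrow> 'y"
  assumes Y_sub: "\<forall>i\<in>{1..n}. subspace (Y i)"
    and A_lin: "\<forall>i\<in>{1..n}. linear (A i) \<and> (\<forall>x. A i x \<in> Y i)"
    and g_pcl: "econvex_on UNIV g \<and> eproper_on UNIV g \<and> elsc_on UNIV g"
    and f_pcl: "\<forall>i\<in>{1..n}. econvex_on (Y i) (f i) \<and> eproper_on (Y i) (f i) \<and> elsc_on (Y i) (f i)"
    and p_pos: "\<forall>i\<in>{1..n}. p i > 0" and p_sum: "(\<Sum>i=1..n. p i) = 1"
    and tau_pos: "\<tau> > 0" and sigma_pos: "\<forall>i\<in>{1..n}. \<sigma> i > 0"
    and steps: "\<forall>i\<in>{1..n}. \<tau> * \<sigma> i * (onorm (A i))\<^sup>2 < p i"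
begin

abbreviation F :: "nat \<Rightarrow> 'y \<Rightarrow> ereal" where
  "F i \<equiv> conjugate (Y i) (f i)"

abbreviation T :: "nat \<Rightarrow> 'x \<times> (nat \<Rightarrow> 'y) \<Rightarrow> 'x \<times> (nat \<Rightarrow> 'y)" where
  "T j \<equiv> Top n p \<tau> \<sigma> g f Y A j"

lemma n_pos: "n \<ge> 1"
  using p_sum by (cases n) auto

lemma p_le_1: "i \<in> {1..n} \<Longrightarrow> p i \<le> 1"
  using member_le_sum[of i "{1..n}" p] p_pos p_sum by (simp add: less_imp_le)

lemma sum_p_mult: "(\<Sum>i=1..n. p i * t) = t"
  using p_sum by (simp add: sum_distrib_right[symmetric])

lemma F_convex_proper_lsc:
  assumes "i \<in> {1..n}"
  shows "econvex_on (Y i) (F i)" "eproper_on (Y i) (F i)" "elsc_on (Y i) (F i)"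
  using assms Y_sub f_pcl
  by (auto intro: econvex_on_conjugate elsc_on_conjugate eproper_on_conjugate)

lemma g_convex_proper_lsc: "econvex_on UNIV g" "eproper_on UNIV g" "elsc_on UNIV g"
  using g_pcl by auto

lemma inner_adjoint_A: "i \<in> {1..n} \<Longrightarrow> inner (adjoint (A i) z) w = inner (A i w) z"
  using A_lin by (simp add: inner_commute adjoint_works)

lemma F_not_MInfty: "i \<in> {1..n} \<Longrightarrow> y \<in> Y i \<Longrightarrow> F i y \<noteq> -\<infinity>"
  using F_convex_proper_lsc(2) unfolding eproper_on_def by blast

lemma g_not_MInfty: "g x \<noteq> -\<infinity>"
  using g_pcl unfolding eproper_on_def by blast

lemma closed_Y: "i \<in> {1..n} \<Longrightarrow> closed (Y i)"
  using Y_sub by (simp add: closed_subspace)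

lemma adjoint_sum_inner:
  "inner (\<Sum>i=1..n. adjoint (A i) (z i)) w = (\<Sum>i=1..n. inner (A i w) (z i))"
  unfolding inner_sum_left by (simp add: inner_adjoint_A)

lemma lagrangian_eq_real:
  assumes "\<forall>i\<in>{1..n}. F i (y i) = ereal (c i)"
  shows "lagrangian n Y A f g x y = ereal (\<Sum>i=1..n. inner (A i x) (y i) - c i) + g x"
  unfolding lagrangian_def using assms
  by (simp add: sum.cong[OF refl, of _ "\<lambda>i. ereal (inner (A i x) (y i) - c i)"])

end

locale spdhg_saddle = spdhg_setting n p \<sigma> \<tau> g f Y A
  for n :: nat and p \<sigma> :: "nat \<Rightarrow> real" and \<tau> :: real
    and g :: "'x::euclidean_space \<Rightarrow> ereal" and f :: "nat \<Rightarrow> 'y::euclidean_space \<Rightarrow> ereal"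
    and Y :: "nat \<Rightarrow> 'y set" and A :: "nat \<Rightarrow> 'x \<Rightarrow> 'y" +
  fixes xh :: 'x and yh :: "nat \<Rightarrow> 'y"
  assumes saddle: "saddle_point n Y A f g xh yh"
begin

lemma yh_in_Y: "i \<in> {1..n} \<Longrightarrow> yh i \<in> Y i"
  using saddle unfolding saddle_point_def by blast

lemma saddle_le_dual: "(\<forall>i\<in>{1..n}. y i \<in> Y i) \<Longrightarrow> lagrangian n Y A f g xh y \<le> lagrangian n Y A f g xh yh"
  using saddle unfolding saddle_point_def by blast

lemma saddle_le_primal: "lagrangian n Y A f g xh yh \<le> lagrangian n Y A f g x yh"
  using saddle yh_in_Y unfolding saddle_point_def by blast

lemma saddle_value_finite:
  "lagrangian n Y A f g xh yh \<noteq> \<infinity>" "lagrangian n Y A f g xh yh \<noteq> -\<infinity>"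
proof -
  obtain x1 where x1: "g x1 \<noteq> \<infinity>"
    using g_pcl unfolding eproper_on_def by blast
  have "ereal (inner (A i x1) (yh i)) - F i (yh i) \<noteq> \<infinity>" if "i \<in> {1..n}" for i
    using F_not_MInfty[OF that yh_in_Y[OF that]] by (simp add: ereal_minus_eq_PInfty_iff)
  then have "lagrangian n Y A f g x1 yh \<noteq> \<infinity>"
    unfolding lagrangian_def using x1 by (simp add: sum_Pinfty)
  then show "lagrangian n Y A f g xh yh \<noteq> \<infinity>"
    using saddle_le_primal[of x1] by (metis ereal_infty_less_eq(1))
  then have "g xh \<noteq> \<infinity>"
    unfolding lagrangian_def by auto
  then obtain gx where gx: "g xh = ereal gx"
    using g_not_MInfty[of xh] by (cases "g xh") auto
  have "\<exists>y. y \<in> Y i \<and> F i y \<noteq> \<infinity> \<and> F i y \<noteq> -\<infinity>" if "i \<in> {1..n}" for i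
    using F_convex_proper_lsc(2)[OF that] unfolding eproper_on_def by blast
  then obtain yc where yc: "\<forall>i\<in>{1..n}. yc i \<in> Y i \<and> F i (yc i) \<noteq> \<infinity> \<and> F i (yc i) \<noteq> -\<infinity>"
    by metis
  have "\<exists>r. F i (yc i) = ereal r" if "i \<in> {1..n}" for i
    using yc that by (cases "F i (yc i)") auto
  then obtain c where c: "\<forall>i\<in>{1..n}. F i (yc i) = ereal (c i)"
    by metis
  have "lagrangian n Y A f g xh yc = ereal ((\<Sum>i=1..n. inner (A i xh) (yc i) - c i) + gx)"
    using gx lagrangian_eq_real[OF c] by simp
  then show "lagrangian n Y A f g xh yh \<noteq> -\<infinity>"
    using saddle_le_dual[of yc] yc by (metis MInfty_neq_ereal(1) ereal_infty_less_eq(2))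
qed

lemma g_xh_finite: "g xh \<noteq> \<infinity>"
  using saddle_value_finite(1) unfolding lagrangian_def by auto

lemma F_yh_finite:
  assumes i: "i \<in> {1..n}"
  shows "F i (yh i) \<noteq> \<infinity>"
proof
  assume inf: "F i (yh i) = \<infinity>"
  have "(\<Sum>k=1..n. ereal (inner (A k xh) (yh k)) - F k (yh k))
      = (ereal (inner (A i xh) (yh i)) - F i (yh i))
        + (\<Sum>k\<in>{1..n}-{i}. ereal (inner (A k xh) (yh k)) - F k (yh k))"
    using sum.remove[OF _ i] by blast
  also have "\<dots> = -\<infinity>"
    using inf F_not_MInfty yh_in_Y by (simp add: sum_Pinfty ereal_minus_eq_PInfty_iff)
  finally have "lagrangian n Y A f g xh yh = -\<infinity>"
    unfolding lagrangian_def using g_xh_finite by simp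
  then show False
    using saddle_value_finite(2) by simp
qed

lemma F_yh_real: obtains c where "\<forall>i\<in>{1..n}. F i (yh i) = ereal (c i)"
proof -
  have "\<exists>r. F i (yh i) = ereal r" if "i \<in> {1..n}" for i
    using F_yh_finite[OF that] F_not_MInfty[OF that yh_in_Y[OF that]] by (cases "F i (yh i)") auto
  then show ?thesis
    using that by metis
qed

lemma primal_subgradient:
  "g xh + ereal (inner (- (\<Sum>i=1..n. adjoint (A i) (yh i))) (x - xh)) \<le> g x"
proof -
  obtain c where c: "\<forall>i\<in>{1..n}. F i (yh i) = ereal (c i)"
    using F_yh_real by blast
  obtain gx where gx: "g xh = ereal gx"
    using g_xh_finite g_not_MInfty[of xh] by (cases "g xh") auto
  have "inner (- (\<Sum>i=1..n. adjoint (A i) (yh i))) (x - xh)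
      = (\<Sum>i=1..n. inner (A i xh) (yh i) - c i) - (\<Sum>i=1..n. inner (A i x) (yh i) - c i)"
    unfolding inner_minus_left adjoint_sum_inner
    using A_lin by (simp add: linear_diff inner_diff_left sum_subtractf)
  moreover have "ereal (\<Sum>i=1..n. inner (A i xh) (yh i) - c i) + ereal gx
      \<le> ereal (\<Sum>i=1..n. inner (A i x) (yh i) - c i) + g x"
    using saddle_le_primal[of x] gx lagrangian_eq_real[OF c] by simp
  ultimately show ?thesis
    using gx g_not_MInfty[of x] by (cases "g x") auto
qed

lemma dual_subgradient:
  assumes i: "i \<in> {1..n}" and y: "y \<in> Y i"
  shows "F i (yh i) + ereal (inner (A i xh) (y - yh i)) \<le> F i y"
proof (cases "F i y")
  case (real r)
  obtain c where c: "\<forall>i\<in>{1..n}. F i (yh i) = ereal (c i)"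
    using F_yh_real by blast
  obtain gx where gx: "g xh = ereal gx"
    using g_xh_finite g_not_MInfty[of xh] by (cases "g xh") auto
  define t where "t k = inner (A k xh) (yh k) - c k" for k
  define c' where "c' = c(i := r)"
  have "lagrangian n Y A f g xh (yh(i := y)) = ereal ((\<Sum>k=1..n. inner (A k xh) ((yh(i := y)) k) - c' k) + gx)"
    using gx lagrangian_eq_real[of "yh(i := y)" c'] c real by (simp add: c'_def)
  moreover have "lagrangian n Y A f g xh yh = ereal ((\<Sum>k=1..n. t k) + gx)"
    using gx lagrangian_eq_real[OF c] by (simp add: t_def)
  moreover have "\<forall>k\<in>{1..n}. (yh(i := y)) k \<in> Y k"
    using yh_in_Y y by simp
  ultimately have "(\<Sum>k=1..n. inner (A k xh) ((yh(i := y)) k) - c' k) \<le> (\<Sum>k=1..n. t k)"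
    using saddle_le_dual[of "yh(i := y)"] by simp
  moreover have "(\<Sum>k=1..n. inner (A k xh) ((yh(i := y)) k) - c' k)
      = (\<Sum>k=1..n. t k) + (inner (A i xh) y - r) - t i"
    using i by (subst sum_eq_sum_except_one[where b = t and i = i]) (auto simp: t_def c'_def)
  ultimately show ?thesis
    using real c i by (simp add: t_def inner_diff_right)
qed (use F_not_MInfty[OF i y] in auto)

end

section \<open>A Lyapunov function for the operators T_j\<close>

lemma sqnorm_nonneg: "sqnorm n w \<ge> 0"
  unfolding sqnorm_def by (simp add: sum_nonneg)

lemma cross_term_le_quadratic_form:
  fixes \<alpha> \<beta> L a b :: real
  assumes "\<alpha> \<ge> 0" "\<beta> \<ge> 0" "L \<ge> 0" "L\<^sup>2 \<le> 4 * \<alpha> * \<beta>" "a \<ge> 0" "b \<ge> 0"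
  shows "L * a * b \<le> \<alpha> * a\<^sup>2 + \<beta> * b\<^sup>2"
proof -
  have "(L * a * b)\<^sup>2 = L\<^sup>2 * (a\<^sup>2 * b\<^sup>2)"
    by (simp add: power_mult_distrib)
  also have "\<dots> \<le> (4 * \<alpha> * \<beta>) * (a\<^sup>2 * b\<^sup>2)"
    using assms by (intro mult_right_mono) auto
  also have "\<dots> = 4 * ((\<alpha> * a\<^sup>2) * (\<beta> * b\<^sup>2))"
    by (simp add: mult_ac)
  also have "\<dots> \<le> (\<alpha> * a\<^sup>2 + \<beta> * b\<^sup>2)\<^sup>2"
    using zero_le_power2[of "\<alpha> * a\<^sup>2 - \<beta> * b\<^sup>2"] unfolding power2_sum power2_diff
    by linarith
  finally have "(L * a * b)\<^sup>2 \<le> (\<alpha> * a\<^sup>2 + \<beta> * b\<^sup>2)\<^sup>2" .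
  moreover have "0 \<le> \<alpha> * a\<^sup>2 + \<beta> * b\<^sup>2"
    using assms by simp
  ultimately show ?thesis
    by (rule power2_le_imp_le)
qed

lemma quadratic_form_lower_bound:
  fixes P Q L a b :: real
  assumes P: "P > 0" and Q: "Q > 0" and L: "L \<ge> 0" "L\<^sup>2 < 4 * P * Q" and ab: "a \<ge> 0" "b \<ge> 0"
  shows "(4 * P * Q - L\<^sup>2) / (4 * (P + Q)) * (a\<^sup>2 + b\<^sup>2) \<le> P * a\<^sup>2 + Q * b\<^sup>2 - L * a * b"
proof -
  define k where "k = (4 * P * Q - L\<^sup>2) / (4 * (P + Q))"
  have k: "k * (P + Q) = P * Q - L\<^sup>2 / 4" "k > 0"
    using P Q L(2) by (simp_all add: k_def field_simps)
  have "k * (P + Q) \<le> P * (P + Q)" "k * (P + Q) \<le> Q * (P + Q)"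
    unfolding k(1) using P Q by (simp_all add: algebra_simps)
  then have "k \<le> P" "k \<le> Q"
    using P Q by (simp_all add: mult_le_cancel_right_pos)
  moreover have "4 * (P - k) * (Q - k) = 4 * (P * Q) - 4 * (k * (P + Q)) + 4 * k * k"
    by (simp add: algebra_simps)
  then have "L\<^sup>2 \<le> 4 * (P - k) * (Q - k)"
    using k by simp
  ultimately have "L * a * b \<le> (P - k) * a\<^sup>2 + (Q - k) * b\<^sup>2"
    using L(1) ab by (intro cross_term_le_quadratic_form) auto
  then show ?thesis
    unfolding k_def[symmetric] by (simp add: algebra_simps)
qed

context spdhg_setting
begin

text \<open>With P = p j / (2 \<tau>), Q = 1 / (2 \<sigma> j) and L = onorm (A j) this is the constant
  (4 P Q - L^2) / (4 (P + Q)) of quadratic_form_lower_bound.\<close>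

definition kappa :: "nat \<Rightarrow> real" where
  "kappa j = (p j / (\<tau> * \<sigma> j) - (onorm (A j))\<^sup>2) / (2 * (p j / \<tau> + 1 / \<sigma> j))"

lemma kappa_pos:
  assumes j: "j \<in> {1..n}"
  shows "kappa j > 0"
proof -
  have pj: "p j > 0" and sj: "\<sigma> j > 0"
    using p_pos sigma_pos j by auto
  have "(onorm (A j))\<^sup>2 < p j / (\<tau> * \<sigma> j)"
    using steps j tau_pos sj by (simp add: pos_less_divide_eq mult.commute mult.left_commute)
  moreover have "0 < 2 * (p j / \<tau> + 1 / \<sigma> j)"
    using pj sj tau_pos by (intro mult_pos_pos add_pos_pos divide_pos_pos) auto
  ultimately show ?thesis
    unfolding kappa_def by (simp add: divide_pos_pos)
qed

lemma kappa_bound: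
  assumes j: "j \<in> {1..n}"
  shows "kappa j * ((norm a)\<^sup>2 + (norm b)\<^sup>2)
    \<le> p j * ((norm a)\<^sup>2 / (2 * \<tau>)) + (norm b)\<^sup>2 / (2 * \<sigma> j) - \<bar>inner (A j a) b\<bar>"
proof -
  define L where "L = onorm (A j)"
  have bl: "bounded_linear (A j)"
    using A_lin j by (simp add: linear_conv_bounded_linear)
  have pj: "p j > 0" and sj: "\<sigma> j > 0"
    using p_pos sigma_pos j by auto
  have L: "L \<ge> 0" "L\<^sup>2 < 4 * (p j / (2 * \<tau>)) * (1 / (2 * \<sigma> j))"
    using onorm_pos_le[OF bl] steps j tau_pos sj by (auto simp: L_def field_simps)
  have "\<bar>inner (A j a) b\<bar> \<le> norm (A j a) * norm b"
    by (rule Cauchy_Schwarz_ineq2)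
  also have "\<dots> \<le> L * norm a * norm b"
    unfolding L_def by (intro mult_right_mono onorm[OF bl]) auto
  finally have "\<bar>inner (A j a) b\<bar> \<le> L * norm a * norm b" .
  moreover have "4 * (p j / (2 * \<tau>)) * (1 / (2 * \<sigma> j)) = p j / (\<tau> * \<sigma> j)"
    "4 * (p j / (2 * \<tau>) + 1 / (2 * \<sigma> j)) = 2 * (p j / \<tau> + 1 / \<sigma> j)"
    by (simp_all add: field_simps)
  then have "kappa j = (4 * (p j / (2 * \<tau>)) * (1 / (2 * \<sigma> j)) - L\<^sup>2) / (4 * (p j / (2 * \<tau>) + 1 / (2 * \<sigma> j)))"
    by (simp only: kappa_def L_def)
  ultimately show ?thesis
    using quadratic_form_lower_bound[OF _ _ L norm_ge_zero norm_ge_zero, of a b] pj sj tau_pos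
    by simp
qed

definition kappa_min :: real where
  "kappa_min = Min (kappa ` {1..n})"

lemma kappa_min_pos: "kappa_min > 0"
  unfolding kappa_min_def using n_pos kappa_pos by (subst Min_gr_iff) auto

lemma kappa_min_le: "j \<in> {1..n} \<Longrightarrow> kappa_min \<le> kappa j"
  unfolding kappa_min_def by (rule Min_le) auto

lemma Top_pair:
  "T j (x, y) =
    (prox UNIV \<tau> g (x - \<tau> *\<^sub>R (\<Sum>i=1..n. adjoint (A i) (y i))
        - ((1 + 1 / p j) * \<tau>) *\<^sub>R adjoint (A j) (prox (Y j) (\<sigma> j) (F j) (y j + \<sigma> j *\<^sub>R A j x) - y j)),
     y(j := prox (Y j) (\<sigma> j) (F j) (y j + \<sigma> j *\<^sub>R A j x)))"
  by (simp add: Top_def Let_def)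

lemma sqnorm_wdiff_Top:
  assumes "j \<in> {1..n}"
  shows "sqnorm n (wdiff (T j (x, y)) (x, y))
    = (norm (fst (T j (x, y)) - x))\<^sup>2 + (norm (snd (T j (x, y)) j - y j))\<^sup>2"
  using assms unfolding sqnorm_def wdiff_def Top_pair
  by (subst sum_eq_sum_except_one[where b = "\<lambda>_. 0" and i = j]) auto

end

context spdhg_saddle
begin

definition dist_saddle :: "'x \<times> (nat \<Rightarrow> 'y) \<Rightarrow> real" where
  "dist_saddle w = (norm (fst w - xh))\<^sup>2 / (2 * \<tau>) + (\<Sum>i=1..n. (norm (snd w i - yh i))\<^sup>2 / (2 * \<sigma> i * p i))"

definition coupling :: "'x \<times> (nat \<Rightarrow> 'y) \<Rightarrow> real" where
  "coupling w = (\<Sum>i=1..n. inner (A i (fst w - xh)) (snd w i - yh i))"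

definition lyapunov :: "'x \<times> (nat \<Rightarrow> 'y) \<Rightarrow> real" where
  "lyapunov w = dist_saddle w + coupling w"

lemma primal_step:
  fixes x :: 'x and y :: "nat \<Rightarrow> 'y"
  assumes j: "j \<in> {1..n}"
  defines "x' \<equiv> fst (T j (x, y))" and "\<delta> \<equiv> snd (T j (x, y)) j - y j"
  shows "(\<Sum>i=1..n. inner (A i (x' - xh)) (y i - yh i)) + (1 + 1 / p j) * inner (A j (x' - xh)) \<delta>
    + (norm (x' - xh))\<^sup>2 / (2 * \<tau>) + (norm (x' - x))\<^sup>2 / (2 * \<tau>) \<le> (norm (x - xh))\<^sup>2 / (2 * \<tau>)"
proof -
  define s where "s = (\<Sum>i=1..n. adjoint (A i) (y i)) + (1 + 1 / p j) *\<^sub>R adjoint (A j) \<delta>"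
  define s0 where "s0 = - (\<Sum>i=1..n. adjoint (A i) (yh i))"
  have "x' = prox UNIV \<tau> g (x - \<tau> *\<^sub>R s)"
    unfolding x'_def \<delta>_def s_def Top_pair by (simp add: algebra_simps)
  moreover have "\<forall>w\<in>UNIV. g xh + ereal (inner s0 (w - xh)) \<le> g w"
    unfolding s0_def using primal_subgradient by blast
  ultimately have "2 * \<tau> * inner (s + s0) (x' - xh) + (norm (x' - xh))\<^sup>2 + (norm (x' - x))\<^sup>2 \<le> (norm (x - xh))\<^sup>2"
    using prox_three_point[OF tau_pos closed_UNIV g_convex_proper_lsc _ g_xh_finite] by blast
  moreover have "inner (s + s0) (x' - xh)
      = (\<Sum>i=1..n. inner (A i (x' - xh)) (y i - yh i)) + (1 + 1 / p j) * inner (A j (x' - xh)) \<delta>"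
    unfolding s_def s0_def inner_add_left inner_minus_left inner_scaleR_left adjoint_sum_inner
      inner_adjoint_A[OF j]
    by (simp add: inner_diff_right sum_subtractf)
  ultimately have "(2 * \<tau> * ((\<Sum>i=1..n. inner (A i (x' - xh)) (y i - yh i))
      + (1 + 1 / p j) * inner (A j (x' - xh)) \<delta>) + (norm (x' - xh))\<^sup>2 + (norm (x' - x))\<^sup>2) / (2 * \<tau>)
      \<le> (norm (x - xh))\<^sup>2 / (2 * \<tau>)"
    using tau_pos by (intro divide_right_mono) auto
  then show ?thesis
    using tau_pos by (simp add: add_divide_distrib)
qed

lemma dual_step:
  fixes x :: 'x and y :: "nat \<Rightarrow> 'y"
  assumes j: "j \<in> {1..n}"
  defines "yj \<equiv> snd (T j (x, y)) j"
  shows "(norm (yj - yh j))\<^sup>2 / (2 * \<sigma> j) + (norm (yj - y j))\<^sup>2 / (2 * \<sigma> j)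
    \<le> (norm (y j - yh j))\<^sup>2 / (2 * \<sigma> j) + inner (A j (x - xh)) (yj - yh j)"
proof -
  have sj: "\<sigma> j > 0"
    using sigma_pos j by blast
  have "yj = prox (Y j) (\<sigma> j) (F j) (y j - \<sigma> j *\<^sub>R (- A j x))"
    unfolding yj_def Top_pair by simp
  moreover have "\<forall>w\<in>Y j. F j (yh j) + ereal (inner (A j xh) (w - yh j)) \<le> F j w"
    using dual_subgradient[OF j] by blast
  ultimately have "2 * \<sigma> j * inner (- A j x + A j xh) (yj - yh j) + (norm (yj - yh j))\<^sup>2 + (norm (yj - y j))\<^sup>2
      \<le> (norm (y j - yh j))\<^sup>2"
    using prox_three_point[OF sj closed_Y F_convex_proper_lsc yh_in_Y F_yh_finite] j by blast
  moreover have "inner (- A j x + A j xh) (yj - yh j) = - inner (A j (x - xh)) (yj - yh j)"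
    using A_lin j by (simp add: linear_diff inner_diff_left)
  ultimately have "(norm (yj - yh j))\<^sup>2 + (norm (yj - y j))\<^sup>2
      \<le> (norm (y j - yh j))\<^sup>2 + 2 * \<sigma> j * inner (A j (x - xh)) (yj - yh j)"
    by simp
  then have "((norm (yj - yh j))\<^sup>2 + (norm (yj - y j))\<^sup>2) / (2 * \<sigma> j)
      \<le> ((norm (y j - yh j))\<^sup>2 + 2 * \<sigma> j * inner (A j (x - xh)) (yj - yh j)) / (2 * \<sigma> j)"
    using sj by (intro divide_right_mono) auto
  then show ?thesis
    using sj by (simp add: add_divide_distrib)
qed

lemma lyapunov_Top:
  fixes x :: 'x and y :: "nat \<Rightarrow> 'y"
  assumes j: "j \<in> {1..n}"
  defines "x' \<equiv> fst (T j (x, y))" and "yj \<equiv> snd (T j (x, y)) j"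
  shows "lyapunov (T j (x, y)) = (norm (x' - xh))\<^sup>2 / (2 * \<tau>) + (\<Sum>i=1..n. (norm (y i - yh i))\<^sup>2 / (2 * \<sigma> i * p i))
    + ((norm (yj - yh j))\<^sup>2 - (norm (y j - yh j))\<^sup>2) / (2 * \<sigma> j * p j)
    + (\<Sum>i=1..n. inner (A i (x' - xh)) (y i - yh i)) + inner (A j (x' - xh)) (yj - y j)"
proof -
  have "T j (x, y) = (x', y(j := yj))"
    unfolding x'_def yj_def Top_pair by simp
  moreover have "(\<Sum>i=1..n. (norm ((y(j := yj)) i - yh i))\<^sup>2 / (2 * \<sigma> i * p i))
      = (\<Sum>i=1..n. (norm (y i - yh i))\<^sup>2 / (2 * \<sigma> i * p i))
        + (norm (yj - yh j))\<^sup>2 / (2 * \<sigma> j * p j) - (norm (y j - yh j))\<^sup>2 / (2 * \<sigma> j * p j)"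
    using j by (subst sum_eq_sum_except_one[where i = j]) auto
  moreover have "(\<Sum>i=1..n. inner (A i (x' - xh)) ((y(j := yj)) i - yh i))
      = (\<Sum>i=1..n. inner (A i (x' - xh)) (y i - yh i)) + inner (A j (x' - xh)) (yj - y j)"
    using j by (subst sum_eq_sum_except_one[where i = j]) (auto simp: inner_diff_right)
  ultimately show ?thesis
    by (simp add: lyapunov_def dist_saddle_def coupling_def diff_divide_distrib)
qed

text \<open>The prox inequality of the primal update, weighted by p j, plus that of the dual update;
  the remaining cross term is absorbed by kappa_bound.\<close>

lemma lyapunov_step:
  assumes j: "j \<in> {1..n}"
  shows "p j * lyapunov (T j (x, y)) + kappa j * sqnorm n (wdiff (T j (x, y)) (x, y))
    \<le> p j * dist_saddle (x, y) + inner (A j (x - xh)) (y j - yh j)"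
proof -
  define x' where "x' = fst (T j (x, y))"
  define yj where "yj = snd (T j (x, y)) j"
  define AdS where "AdS = (\<Sum>i=1..n. inner (A i (x' - xh)) (y i - yh i))"
  define AD where "AD = inner (A j (x' - xh)) (yj - y j)"
  define R where "R = inner (A j (x' - x)) (yj - y j)"
  define Sd where "Sd = (\<Sum>i=1..n. (norm (y i - yh i))\<^sup>2 / (2 * \<sigma> i * p i))"
  have pj: "p j > 0" and sj: "\<sigma> j > 0"
    using p_pos sigma_pos j by auto
  have "p j * (AdS + (1 + 1 / p j) * AD + (norm (x' - xh))\<^sup>2 / (2 * \<tau>) + (norm (x' - x))\<^sup>2 / (2 * \<tau>))
      \<le> p j * ((norm (x - xh))\<^sup>2 / (2 * \<tau>))"
    using primal_step[OF j] pj unfolding AdS_def AD_def x'_def yj_def by (intro mult_left_mono) auto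
  moreover have "p j * ((1 + 1 / p j) * AD) = p j * AD + AD"
    using pj by (simp add: field_simps)
  ultimately have P: "p j * AdS + p j * AD + AD + p j * ((norm (x' - xh))\<^sup>2 / (2 * \<tau>))
      + p j * ((norm (x' - x))\<^sup>2 / (2 * \<tau>)) \<le> p j * ((norm (x - xh))\<^sup>2 / (2 * \<tau>))"
    by (simp only: distrib_left)
  have "p j * lyapunov (T j (x, y)) = p j * ((norm (x' - xh))\<^sup>2 / (2 * \<tau>)) + p j * Sd
      + p j * (((norm (yj - yh j))\<^sup>2 - (norm (y j - yh j))\<^sup>2) / (2 * \<sigma> j * p j))
      + p j * AdS + p j * AD"
    unfolding lyapunov_Top[OF j] x'_def[symmetric] yj_def[symmetric] AdS_def[symmetric]
      AD_def[symmetric] Sd_def[symmetric] by (simp only: distrib_left)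
  moreover have "p j * (((norm (yj - yh j))\<^sup>2 - (norm (y j - yh j))\<^sup>2) / (2 * \<sigma> j * p j))
      = (norm (yj - yh j))\<^sup>2 / (2 * \<sigma> j) - (norm (y j - yh j))\<^sup>2 / (2 * \<sigma> j)"
    using pj sj by (simp add: field_simps)
  moreover have "p j * dist_saddle (x, y) = p j * ((norm (x - xh))\<^sup>2 / (2 * \<tau>)) + p j * Sd"
    by (simp add: dist_saddle_def Sd_def distrib_left)
  moreover have "kappa j * ((norm (x' - x))\<^sup>2 + (norm (yj - y j))\<^sup>2)
      \<le> p j * ((norm (x' - x))\<^sup>2 / (2 * \<tau>)) + (norm (yj - y j))\<^sup>2 / (2 * \<sigma> j) - \<bar>R\<bar>"
    using kappa_bound[OF j] unfolding R_def by simp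
  moreover have "inner (A j (x - xh)) (yj - yh j) = inner (A j (x - xh)) (y j - yh j) + AD - R"
    using A_lin j unfolding AD_def R_def
    by (simp add: linear_diff inner_diff_left inner_diff_right algebra_simps)
  moreover have "sqnorm n (wdiff (T j (x, y)) (x, y)) = (norm (x' - x))\<^sup>2 + (norm (yj - y j))\<^sup>2"
    unfolding x'_def yj_def by (rule sqnorm_wdiff_Top[OF j])
  ultimately show ?thesis
    using P dual_step[OF j, of x y] abs_ge_minus_self[of R] unfolding yj_def[symmetric] by simp
qed

text \<open>Distributing the primal distance with the weights p i splits the Lyapunov function into
  n terms, each of which kappa_bound (together with p i \<le> 1) shows to be nonnegative.\<close>

lemma lyapunov_nonneg: "lyapunov w \<ge> 0"
proof -
  define e where "e = fst w - xh"
  define d where "d i = snd w i - yh i" for i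
  have "lyapunov w = (\<Sum>i=1..n. p i * ((norm e)\<^sup>2 / (2 * \<tau>)) + (norm (d i))\<^sup>2 / (2 * \<sigma> i * p i)
      + inner (A i e) (d i))"
    unfolding sum.distrib sum_p_mult by (simp add: lyapunov_def dist_saddle_def coupling_def e_def d_def)
  also have "\<dots> \<ge> 0"
  proof (intro sum_nonneg)
    fix i assume i: "i \<in> {1..n}"
    have pi: "p i > 0" "p i \<le> 1" and si: "\<sigma> i > 0"
      using p_pos p_le_1 sigma_pos i by auto
    have "(norm (d i))\<^sup>2 / (2 * \<sigma> i) \<le> (norm (d i))\<^sup>2 / (2 * \<sigma> i * p i)"
      using pi si by (simp add: field_simps mult_left_le_one_le)
    moreover have "0 \<le> kappa i * ((norm e)\<^sup>2 + (norm (d i))\<^sup>2)"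
      using kappa_pos[OF i] by simp
    ultimately show "0 \<le> p i * ((norm e)\<^sup>2 / (2 * \<tau>)) + (norm (d i))\<^sup>2 / (2 * \<sigma> i * p i) + inner (A i e) (d i)"
      using kappa_bound[OF i, of e "d i"] abs_ge_minus_self[of "inner (A i e) (d i)"] by simp
  qed
  finally show ?thesis .
qed

lemma lyapunov_expected_step:
  "(\<Sum>j=1..n. p j * lyapunov (T j w)) + kappa_min * (\<Sum>j=1..n. sqnorm n (wdiff (T j w) w)) \<le> lyapunov w"
proof -
  obtain x y where w: "w = (x, y)"
    by (cases w)
  define r where "r j = sqnorm n (wdiff (T j w) w)" for j
  have "(\<Sum>j=1..n. p j * lyapunov (T j w) + kappa j * r j)
      \<le> (\<Sum>j=1..n. p j * dist_saddle w + inner (A j (x - xh)) (y j - yh j))"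
    unfolding r_def w by (intro sum_mono lyapunov_step) auto
  also have "\<dots> = lyapunov w"
    unfolding sum.distrib sum_p_mult by (simp add: lyapunov_def coupling_def w)
  finally have "(\<Sum>j=1..n. p j * lyapunov (T j w)) + (\<Sum>j=1..n. kappa j * r j) \<le> lyapunov w"
    by (simp add: sum.distrib)
  moreover have "kappa_min * (\<Sum>j=1..n. r j) \<le> (\<Sum>j=1..n. kappa j * r j)"
    unfolding sum_distrib_left
    by (intro sum_mono mult_right_mono kappa_min_le) (auto simp: r_def sqnorm_nonneg)
  ultimately show ?thesis
    unfolding r_def by linarith
qed

end

section \<open>SPDHG as a random iteration of the operators T_j\<close>

definition spdhg_u ::
  "(nat \<Rightarrow> real) \<Rightarrow> real \<Rightarrow> (nat \<Rightarrow> real) \<Rightarrow> ('x::euclidean_space \<Rightarrow> ereal) \<Rightarrow> (nat \<Rightarrow> 'y::euclidean_space \<Rightarrow> ereal)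
    \<Rightarrow> (nat \<Rightarrow> 'y set) \<Rightarrow> (nat \<Rightarrow> 'x \<Rightarrow> 'y) \<Rightarrow> 'x \<Rightarrow> (nat \<Rightarrow> nat) \<Rightarrow> nat \<Rightarrow> 'x \<times> (nat \<Rightarrow> 'y)" where
  "spdhg_u p \<tau> \<sigma> g f Y A x0 js k =
     (fst (spdhg p \<tau> \<sigma> g f Y A x0 js (Suc k)), fst (snd (spdhg p \<tau> \<sigma> g f Y A x0 js k)))"

lemma spdhg_cong:
  "(\<forall>m<k. js m = js' m) \<Longrightarrow> spdhg p \<tau> \<sigma> g f Y A x0 js k = spdhg p \<tau> \<sigma> g f Y A x0 js' k"
  by (induction k) auto

lemma spdhg_fst_Suc:
  "fst (spdhg p \<tau> \<sigma> g f Y A x0 js (Suc k)) =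
     prox UNIV \<tau> g (fst (spdhg p \<tau> \<sigma> g f Y A x0 js k) - \<tau> *\<^sub>R snd (snd (snd (spdhg p \<tau> \<sigma> g f Y A x0 js k))))"
  by (cases "spdhg p \<tau> \<sigma> g f Y A x0 js k") (simp add: Let_def)

lemma spdhg_u_cong:
  "(\<forall>m<k. js m = js' m) \<Longrightarrow> spdhg_u p \<tau> \<sigma> g f Y A x0 js k = spdhg_u p \<tau> \<sigma> g f Y A x0 js' k"
  unfolding spdhg_u_def spdhg_fst_Suc by (simp add: spdhg_cong[of k js js'])

context spdhg_setting
begin

lemma spdhg_z_eq_adjoint_sum:
  assumes "\<forall>m<k. js m \<in> {1..n}"
  shows "fst (snd (snd (spdhg p \<tau> \<sigma> g f Y A x0 js k)))
    = (\<Sum>i=1..n. adjoint (A i) (fst (snd (spdhg p \<tau> \<sigma> g f Y A x0 js k)) i))"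
  using assms
proof (induction k)
  case 0
  then show ?case
    using A_lin by (simp add: linear_0 adjoint_linear)
next
  case (Suc k)
  obtain x y z zb where st: "spdhg p \<tau> \<sigma> g f Y A x0 js k = (x, y, z, zb)"
    by (cases "spdhg p \<tau> \<sigma> g f Y A x0 js k") auto
  define j where "j = js k"
  define yj where "yj = prox (Y j) (\<sigma> j) (F j) (y j + \<sigma> j *\<^sub>R A j (prox UNIV \<tau> g (x - \<tau> *\<^sub>R zb)))"
  have j: "j \<in> {1..n}"
    using Suc.prems by (simp add: j_def)
  have "(\<Sum>i=1..n. adjoint (A i) ((y(j := yj)) i))
      = (\<Sum>i=1..n. adjoint (A i) (y i)) + adjoint (A j) yj - adjoint (A j) (y j)"
    using j by (subst sum_eq_sum_except_one[where i = j]) auto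
  also have "\<dots> = z + adjoint (A j) (yj - y j)"
    using Suc st j A_lin by (simp add: linear_diff adjoint_linear)
  finally show ?case
    by (simp add: st Let_def j_def[symmetric] yj_def[symmetric])
qed

text \<open>By the invariant z = A^T y, the point x^{k+1} - \<tau> zbar^{k+1} at which SPDHG evaluates the
  primal prox is exactly the corresponding argument in T_{j^k}.\<close>

lemma spdhg_u_Suc:
  assumes "\<forall>m\<le>k. js m \<in> {1..n}"
  shows "spdhg_u p \<tau> \<sigma> g f Y A x0 js (Suc k) = T (js k) (spdhg_u p \<tau> \<sigma> g f Y A x0 js k)"
proof -
  obtain x y z zb where st: "spdhg p \<tau> \<sigma> g f Y A x0 js k = (x, y, z, zb)"
    by (cases "spdhg p \<tau> \<sigma> g f Y A x0 js k") auto
  have z: "z = (\<Sum>i=1..n. adjoint (A i) (y i))"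
    using spdhg_z_eq_adjoint_sum[of k js x0] assms st by auto
  define j where "j = js k"
  define x' where "x' = prox UNIV \<tau> g (x - \<tau> *\<^sub>R zb)"
  define yj where "yj = prox (Y j) (\<sigma> j) (F j) (y j + \<sigma> j *\<^sub>R A j x')"
  define D where "D = adjoint (A j) (yj - y j)"
  have "spdhg p \<tau> \<sigma> g f Y A x0 js (Suc k) = (x', y(j := yj), z + D, z + D + (1 / p j) *\<^sub>R D)"
    by (simp add: st Let_def j_def x'_def yj_def D_def)
  then have "spdhg_u p \<tau> \<sigma> g f Y A x0 js (Suc k) = (prox UNIV \<tau> g (x' - \<tau> *\<^sub>R (z + D + (1 / p j) *\<^sub>R D)), y(j := yj))"
    unfolding spdhg_u_def spdhg_fst_Suc[of p \<tau> \<sigma> g f Y A x0 js "Suc k"] by simp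
  moreover have "spdhg_u p \<tau> \<sigma> g f Y A x0 js k = (x', y)"
    unfolding spdhg_u_def spdhg_fst_Suc by (simp add: st x'_def)
  moreover have "x' - \<tau> *\<^sub>R (z + D + (1 / p j) *\<^sub>R D)
      = x' - \<tau> *\<^sub>R (\<Sum>i=1..n. adjoint (A i) (y i)) - ((1 + 1 / p j) * \<tau>) *\<^sub>R D"
    unfolding z by (simp add: algebra_simps scaleR_add_right scaleR_add_left)
  moreover have "T j (x', y) = (prox UNIV \<tau> g (x' - \<tau> *\<^sub>R (\<Sum>i=1..n. adjoint (A i) (y i))
      - ((1 + 1 / p j) * \<tau>) *\<^sub>R D), y(j := yj))"
    unfolding Top_pair yj_def D_def ..
  ultimately show ?thesis
    unfolding j_def[symmetric] by (simp only:)
qed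

end

definition index_lists :: "nat \<Rightarrow> nat \<Rightarrow> nat list set" where
  "index_lists n k = {xs. set xs \<subseteq> {1..n} \<and> length xs = k}"

lemma finite_index_lists: "finite (index_lists n k)"
  unfolding index_lists_def by (rule finite_lists_length_eq) simp

lemma index_lists_Suc: "index_lists n (Suc k) = (\<lambda>(xs, j). xs @ [j]) ` (index_lists n k \<times> {1..n})"
proof
  show "index_lists n (Suc k) \<subseteq> (\<lambda>(xs, j). xs @ [j]) ` (index_lists n k \<times> {1..n})"
  proof
    fix zs assume "zs \<in> index_lists n (Suc k)"
    then have zs: "set zs \<subseteq> {1..n}" "length zs = Suc k"
      by (auto simp: index_lists_def)
    then obtain xs j where "zs = xs @ [j]"
      by (metis length_Suc_conv_rev)
    with zs show "zs \<in> (\<lambda>(xs, j). xs @ [j]) ` (index_lists n k \<times> {1..n})"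
      by (auto simp: index_lists_def image_iff)
  qed
qed (auto simp: index_lists_def)

lemma sum_index_lists_Suc:
  "(\<Sum>zs\<in>index_lists n (Suc k). h zs) = (\<Sum>xs\<in>index_lists n k. \<Sum>j=1..n. h (xs @ [j]))"
proof -
  have "inj_on (\<lambda>(xs, j). xs @ [j]) (index_lists n k \<times> {1..n})"
    by (auto simp: inj_on_def)
  then have "(\<Sum>zs\<in>index_lists n (Suc k). h zs) = (\<Sum>(xs, j)\<in>index_lists n k \<times> {1..n}. h (xs @ [j]))"
    unfolding index_lists_Suc by (subst sum.reindex) (auto simp: case_prod_beta)
  also have "\<dots> = (\<Sum>xs\<in>index_lists n k. \<Sum>j=1..n. h (xs @ [j]))"
    by (rule sum.cartesian_product[symmetric])
  finally show ?thesis .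
qed

context spdhg_saddle
begin

text \<open>The entries of (!) xs beyond length xs are unspecified; the first length xs steps of the
  iteration never read them.\<close>

definition u_along :: "'x \<Rightarrow> nat list \<Rightarrow> 'x \<times> (nat \<Rightarrow> 'y)" where
  "u_along x0 xs = spdhg_u p \<tau> \<sigma> g f Y A x0 ((!) xs) (length xs)"

lemma u_along_snoc:
  assumes "xs \<in> index_lists n k" "j \<in> {1..n}"
  shows "u_along x0 (xs @ [j]) = T j (u_along x0 xs)"
proof -
  have len: "length xs = k"
    using assms(1) by (simp add: index_lists_def)
  have "\<forall>m\<le>k. (xs @ [j]) ! m \<in> {1..n}"
    using assms len unfolding index_lists_def
    by (auto simp: nth_append less_Suc_eq_le[symmetric] dest!: nth_mem)
  then have "u_along x0 (xs @ [j]) = T ((xs @ [j]) ! k) (spdhg_u p \<tau> \<sigma> g f Y A x0 ((!) (xs @ [j])) k)"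
    unfolding u_along_def using len by (simp add: spdhg_u_Suc)
  also have "spdhg_u p \<tau> \<sigma> g f Y A x0 ((!) (xs @ [j])) k = u_along x0 xs"
    unfolding u_along_def len by (rule spdhg_u_cong) (auto simp: nth_append len)
  finally show ?thesis
    by (simp add: len[symmetric])
qed

text \<open>Expectations at step k, written as sums over the possible index lists weighted by their
  probabilities.\<close>

definition expected_lyapunov :: "'x \<Rightarrow> nat \<Rightarrow> real" where
  "expected_lyapunov x0 k = (\<Sum>xs\<in>index_lists n k. prod_list (map p xs) * lyapunov (u_along x0 xs))"

definition expected_residual :: "'x \<Rightarrow> nat \<Rightarrow> real" where
  "expected_residual x0 k = (\<Sum>xs\<in>index_lists n k. prod_list (map p xs) *
     (\<Sum>j=1..n. sqnorm n (wdiff (T j (u_along x0 xs)) (u_along x0 xs))))"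

lemma prod_list_p_nonneg: "xs \<in> index_lists n k \<Longrightarrow> prod_list (map p xs) \<ge> 0"
  unfolding index_lists_def by (rule prod_list_nonneg) (use p_pos in force)

lemma expected_residual_nonneg: "expected_residual x0 k \<ge> 0"
  unfolding expected_residual_def
  by (intro sum_nonneg mult_nonneg_nonneg prod_list_p_nonneg sqnorm_nonneg)

lemma expected_lyapunov_Suc:
  "expected_lyapunov x0 (Suc k) + kappa_min * expected_residual x0 k \<le> expected_lyapunov x0 k"
proof -
  have "expected_lyapunov x0 (Suc k)
      = (\<Sum>xs\<in>index_lists n k. prod_list (map p xs) * (\<Sum>j=1..n. p j * lyapunov (T j (u_along x0 xs))))"
    unfolding expected_lyapunov_def sum_index_lists_Suc sum_distrib_left
    by (intro sum.cong refl) (simp add: u_along_snoc mult_ac)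
  moreover have "kappa_min * expected_residual x0 k = (\<Sum>xs\<in>index_lists n k. prod_list (map p xs) *
      (kappa_min * (\<Sum>j=1..n. sqnorm n (wdiff (T j (u_along x0 xs)) (u_along x0 xs)))))"
    unfolding expected_residual_def sum_distrib_left by (simp add: mult_ac)
  ultimately have "expected_lyapunov x0 (Suc k) + kappa_min * expected_residual x0 k
      = (\<Sum>xs\<in>index_lists n k. prod_list (map p xs) * ((\<Sum>j=1..n. p j * lyapunov (T j (u_along x0 xs)))
          + kappa_min * (\<Sum>j=1..n. sqnorm n (wdiff (T j (u_along x0 xs)) (u_along x0 xs)))))"
    by (simp add: distrib_left sum.distrib)
  also have "\<dots> \<le> expected_lyapunov x0 k"
    unfolding expected_lyapunov_def
    by (intro sum_mono mult_left_mono lyapunov_expected_step prod_list_p_nonneg)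
  finally show ?thesis .
qed

lemma summable_expected_residual: "summable (expected_residual x0)"
proof -
  have telescope: "kappa_min * (\<Sum>k<N. expected_residual x0 k) + expected_lyapunov x0 N
      \<le> expected_lyapunov x0 0" for N
  proof (induction N)
    case (Suc N)
    then show ?case
      unfolding sum.lessThan_Suc distrib_left using expected_lyapunov_Suc[of x0 N] by linarith
  qed simp
  have nonneg: "expected_lyapunov x0 N \<ge> 0" for N
    unfolding expected_lyapunov_def
    by (intro sum_nonneg mult_nonneg_nonneg prod_list_p_nonneg lyapunov_nonneg)
  have "kappa_min * (\<Sum>k<N. expected_residual x0 k) \<le> expected_lyapunov x0 0" for N
    using telescope[of N] nonneg[of N] by linarith
  then have "(\<Sum>k<N. expected_residual x0 k) \<le> expected_lyapunov x0 0 / kappa_min" for N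
    using kappa_min_pos by (simp add: pos_le_divide_eq mult.commute)
  then show ?thesis
    by (intro summableI_nonneg_bounded expected_residual_nonneg)
qed

end

section \<open>Independent random indices\<close>

lemma prod_lessThan_length_nth: "(\<Prod>m<length xs. p (xs ! m)) = prod_list (map p xs)"
proof (induction xs rule: rev_induct)
  case (snoc a xs)
  have "(\<Prod>m<length (xs @ [a]). p ((xs @ [a]) ! m)) = (\<Prod>m<length xs. p ((xs @ [a]) ! m)) * p a"
    by (simp add: nth_append)
  also have "(\<Prod>m<length xs. p ((xs @ [a]) ! m)) = (\<Prod>m<length xs. p (xs ! m))"
    by (rule prod.cong) (auto simp: nth_append)
  finally show ?case
    using snoc by simp
qed simp

locale index_process = prob_space M for M :: "'a measure" +
  fixes J :: "nat \<Rightarrow> 'a \<Rightarrow> nat" and n :: nat and p :: "nat \<Rightarrow> real"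
  assumes J_meas: "\<forall>k. J k \<in> measurable M (count_space UNIV)"
    and J_indep: "indep_vars (\<lambda>_. count_space UNIV) J UNIV"
    and J_distr: "\<forall>k. \<forall>i\<in>{1..n}. measure M {\<omega> \<in> space M. J k \<omega> = i} = p i"
    and p_sum: "(\<Sum>i=1..n. p i) = 1"
begin

lemma J_measurable[measurable]: "J k \<in> measurable M (count_space UNIV)"
  using J_meas by blast

lemma prob_J_eq: "prob {\<omega> \<in> space M. J k \<omega> \<in> I} = (\<Sum>i\<in>I. p i)" if "I \<subseteq> {1..n}"
proof -
  define N where "N = distr M (count_space UNIV) (J k)"
  interpret N: prob_space N
    unfolding N_def by (rule prob_space_distr) simp
  have "finite I"
    using that finite_subset by blast
  have N_eq: "measure N B = prob {\<omega> \<in> space M. J k \<omega> \<in> B}" for B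
  proof -
    have "measure N B = measure M (J k -` B \<inter> space M)"
      unfolding N_def by (rule measure_distr) auto
    also have "J k -` B \<inter> space M = {\<omega> \<in> space M. J k \<omega> \<in> B}"
      by auto
    finally show ?thesis .
  qed
  have "measure N I = (\<Sum>i\<in>I. measure N {i})"
    using \<open>finite I\<close> by (rule N.finite_measure_eq_sum_singleton) (auto simp: N_def)
  also have "\<dots> = (\<Sum>i\<in>I. p i)"
    using J_distr that by (intro sum.cong) (auto simp: N_eq)
  finally show ?thesis
    by (simp add: N_eq)
qed

lemma AE_J_in_range: "AE \<omega> in M. \<forall>m. J m \<omega> \<in> {1..n}"
proof -
  have "AE \<omega> in M. J m \<omega> \<in> {1..n}" for m
  proof -
    have "prob {\<omega> \<in> space M. J m \<omega> \<in> {1..n}} = 1"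
      using prob_J_eq[of "{1..n}" m] p_sum by simp
    from AE_prob_1[OF this] show ?thesis
      by auto
  qed
  then show ?thesis
    by (simp add: AE_all_countable)
qed

lemma measurable_J_prefix: "(\<lambda>\<omega>. map (\<lambda>m. J m \<omega>) [0..<k]) \<in> measurable M (count_space UNIV)"
proof (induction k)
  case (Suc k)
  have "(\<lambda>\<omega>. (\<lambda>xs \<omega>. xs @ [J k \<omega>]) (map (\<lambda>m. J m \<omega>) [0..<k]) \<omega>) \<in> measurable M (count_space UNIV)"
  proof (rule measurable_compose_countable[OF _ Suc.IH])
    fix xs :: "nat list"
    show "(\<lambda>\<omega>. xs @ [J k \<omega>]) \<in> measurable M (count_space UNIV)"
      using measurable_compose_countable[where f = "\<lambda>b \<omega>. xs @ [b]" and g = "J k" and M = M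
          and N = "count_space UNIV"] by simp
  qed
  then show ?case
    by simp
qed simp

lemma prob_J_prefix:
  assumes xs: "xs \<in> index_lists n k"
  shows "prob {\<omega> \<in> space M. map (\<lambda>m. J m \<omega>) [0..<k] = xs} = prod_list (map p xs)"
proof -
  have len: "length xs = k"
    using xs by (simp add: index_lists_def)
  have "{\<omega> \<in> space M. map (\<lambda>m. J m \<omega>) [0..<k] = xs} = space M \<inter> (\<Inter>m\<in>{..<k}. J m -` {xs ! m} \<inter> space M)"
    using len by (auto simp: list_eq_iff_nth_eq)
  moreover have "prob (space M \<inter> (\<Inter>m\<in>{..<k}. J m -` {xs ! m} \<inter> space M))
      = (\<Prod>m<k. prob (J m -` {xs ! m} \<inter> space M))"
  proof (cases "k = 0")
    case False
    have "indep_vars (\<lambda>_. count_space UNIV) J {..<k}"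
      using J_indep by (rule indep_vars_subset) simp
    then have "prob (\<Inter>m\<in>{..<k}. J m -` {xs ! m} \<inter> space M) = (\<Prod>m<k. prob (J m -` {xs ! m} \<inter> space M))"
      using False by (intro indep_varsD_finite) auto
    moreover have "space M \<inter> (\<Inter>m\<in>{..<k}. J m -` {xs ! m} \<inter> space M) = (\<Inter>m\<in>{..<k}. J m -` {xs ! m} \<inter> space M)"
      using False by auto
    ultimately show ?thesis
      by simp
  qed (simp add: prob_space)
  moreover have "prob (J m -` {xs ! m} \<inter> space M) = p (xs ! m)" if "m < k" for m
  proof -
    have "xs ! m \<in> {1..n}"
      using xs len that by (auto simp: index_lists_def dest!: nth_mem)
    moreover have "J m -` {xs ! m} \<inter> space M = {\<omega> \<in> space M. J m \<omega> \<in> {xs ! m}}"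
      by auto
    ultimately show ?thesis
      using prob_J_eq[of "{xs ! m}" m] by simp
  qed
  ultimately show ?thesis
    using prod_lessThan_length_nth[of p xs] len by simp
qed

lemma integral_fun_J_prefix:
  fixes F :: "nat list \<Rightarrow> real"
  shows "integrable M (\<lambda>\<omega>. F (map (\<lambda>m. J m \<omega>) [0..<k]))"
    and "(\<integral>\<omega>. F (map (\<lambda>m. J m \<omega>) [0..<k]) \<partial>M) = (\<Sum>xs\<in>index_lists n k. F xs * prod_list (map p xs))"
proof -
  define E where "E xs = {\<omega> \<in> space M. map (\<lambda>m. J m \<omega>) [0..<k] = xs}" for xs
  define G where "G \<omega> = (\<Sum>xs\<in>index_lists n k. F xs * indicator (E xs) \<omega>)" for \<omega>
  have E: "E xs \<in> sets M" for xs
    unfolding E_def using measurable_J_prefix by measurable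
  have mF: "(\<lambda>\<omega>. F (map (\<lambda>m. J m \<omega>) [0..<k])) \<in> borel_measurable M"
    using measurable_compose_countable[where f = "\<lambda>xs \<omega>. F xs" and g = "\<lambda>\<omega>. map (\<lambda>m. J m \<omega>) [0..<k]"
        and M = M and N = borel] measurable_J_prefix by simp
  have iE: "integrable M (\<lambda>\<omega>. F xs * indicator (E xs) \<omega>)" for xs
    using E[of xs] by (intro integrable_mult_right integrable_real_indicator) (auto simp: emeasure_eq_measure)
  have iG: "integrable M G"
    unfolding G_def by (rule Bochner_Integration.integrable_sum) (rule iE)
  have ae: "AE \<omega> in M. F (map (\<lambda>m. J m \<omega>) [0..<k]) = G \<omega>"
    using AE_J_in_range AE_space
  proof eventually_elim
    case (elim \<omega>)
    have "map (\<lambda>m. J m \<omega>) [0..<k] \<in> index_lists n k"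
      using elim(1) by (auto simp: index_lists_def)
    moreover have "G \<omega> = (\<Sum>xs\<in>index_lists n k. if xs = map (\<lambda>m. J m \<omega>) [0..<k] then F xs else 0)"
      unfolding G_def by (intro sum.cong refl) (auto simp: E_def indicator_def elim)
    ultimately show ?case
      using finite_index_lists by (simp add: sum.delta')
  qed
  show "integrable M (\<lambda>\<omega>. F (map (\<lambda>m. J m \<omega>) [0..<k]))"
    using integrable_cong_AE[OF mF borel_measurable_integrable[OF iG] ae] iG by simp
  have "(\<integral>\<omega>. F (map (\<lambda>m. J m \<omega>) [0..<k]) \<partial>M) = integral\<^sup>L M G"
    by (rule integral_cong_AE[OF mF borel_measurable_integrable[OF iG] ae])
  also have "\<dots> = (\<Sum>xs\<in>index_lists n k. integral\<^sup>L M (\<lambda>\<omega>. F xs * indicator (E xs) \<omega>))"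
    unfolding G_def by (rule Bochner_Integration.integral_sum) (rule iE)
  also have "\<dots> = (\<Sum>xs\<in>index_lists n k. F xs * prob (E xs))"
    using E by simp
  also have "\<dots> = (\<Sum>xs\<in>index_lists n k. F xs * prod_list (map p xs))"
    using prob_J_prefix by (simp add: E_def)
  finally show "(\<integral>\<omega>. F (map (\<lambda>m. J m \<omega>) [0..<k]) \<partial>M) = (\<Sum>xs\<in>index_lists n k. F xs * prod_list (map p xs))" .
qed

end

section \<open>Convergence of the residuals\<close>

lemma AE_tendsto_zero_of_summable_integral:
  fixes I :: "nat \<Rightarrow> 'a \<Rightarrow> real"
  assumes int: "\<And>k. integrable M (I k)" and nonneg: "\<And>k \<omega>. I k \<omega> \<ge> 0"
    and summable: "summable (\<lambda>k. \<integral>\<omega>. I k \<omega> \<partial>M)"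
  shows "AE \<omega> in M. (\<lambda>k. I k \<omega>) \<longlonglongrightarrow> 0"
proof -
  have meas: "I k \<in> borel_measurable M" for k
    using int by (rule borel_measurable_integrable)
  have "(\<integral>\<^sup>+\<omega>. (\<Sum>k. ennreal (I k \<omega>)) \<partial>M) = (\<Sum>k. \<integral>\<^sup>+\<omega>. ennreal (I k \<omega>) \<partial>M)"
    using meas by (intro nn_integral_suminf) auto
  also have "\<dots> = (\<Sum>k. ennreal (\<integral>\<omega>. I k \<omega> \<partial>M))"
    using int nonneg by (simp add: nn_integral_eq_integral)
  also have "\<dots> = ennreal (\<Sum>k. \<integral>\<omega>. I k \<omega> \<partial>M)"
    using summable nonneg by (intro suminf_ennreal2) (auto intro: integral_nonneg_AE)
  finally have "(\<integral>\<^sup>+\<omega>. (\<Sum>k. ennreal (I k \<omega>)) \<partial>M) \<noteq> \<infinity>"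
    by simp
  then have "AE \<omega> in M. (\<Sum>k. ennreal (I k \<omega>)) \<noteq> \<infinity>"
    using meas by (intro nn_integral_PInf_AE) auto
  then show ?thesis
  proof eventually_elim
    case (elim \<omega>)
    then have "summable (\<lambda>k. I k \<omega>)"
      using nonneg by (intro summable_suminf_not_top) auto
    then show ?case
      by (rule summable_LIMSEQ_zero)
  qed
qed

lemma tendsto_zero_components_of_sqnorm:
  assumes lim: "(\<lambda>k. sqnorm n (w k)) \<longlonglongrightarrow> 0"
  shows "(\<lambda>k. fst (w k)) \<longlonglongrightarrow> 0" and "i \<in> {1..n} \<Longrightarrow> (\<lambda>k. snd (w k) i) \<longlonglongrightarrow> 0"
proof -
  have sqrt: "(\<lambda>k. sqrt (sqnorm n (w k))) \<longlonglongrightarrow> 0"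
    using tendsto_real_sqrt[OF lim] by simp
  have fst_le: "norm (fst (w k)) \<le> sqrt (sqnorm n (w k))" for k
    unfolding sqnorm_def by (simp add: real_le_rsqrt sum_nonneg)
  show "(\<lambda>k. fst (w k)) \<longlonglongrightarrow> 0"
    by (rule tendsto_norm_zero_cancel, rule tendsto_sandwich[OF _ _ tendsto_const sqrt])
      (auto intro: fst_le always_eventually)
  assume i: "i \<in> {1..n}"
  have "(norm (snd (w k) i))\<^sup>2 \<le> (\<Sum>i=1..n. (norm (snd (w k) i))\<^sup>2)" for k
    using i by (intro member_le_sum) auto
  then have snd_le: "norm (snd (w k) i) \<le> sqrt (sqnorm n (w k))" for k
    unfolding sqnorm_def by (simp add: real_le_rsqrt add_increasing)
  show "(\<lambda>k. snd (w k) i) \<longlonglongrightarrow> 0"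
    by (rule tendsto_norm_zero_cancel, rule tendsto_sandwich[OF _ _ tendsto_const sqrt])
      (auto intro: snd_le always_eventually)
qed

context spdhg_saddle
begin

text \<open>The residual at step k is a function of the first k indices only, so its expectation
  is a finite sum over index lists.\<close>

lemma summable_integral_residual:
  fixes M :: "'a measure" and J :: "nat \<Rightarrow> 'a \<Rightarrow> nat" and x0 :: 'x
  assumes process: "index_process M J n p" and j: "j \<in> {1..n}"
  defines "I \<equiv> \<lambda>k \<omega>. sqnorm n (wdiff (T j (spdhg_u p \<tau> \<sigma> g f Y A x0 (\<lambda>m. J m \<omega>) k))
                               (spdhg_u p \<tau> \<sigma> g f Y A x0 (\<lambda>m. J m \<omega>) k))"
  shows "integrable M (I k)" and "summable (\<lambda>k. \<integral>\<omega>. I k \<omega> \<partial>M)"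
proof -
  interpret index_process M J n p
    by (rule process)
  define G where "G xs = sqnorm n (wdiff (T j (u_along x0 xs)) (u_along x0 xs))" for xs
  have I_eq: "I k = (\<lambda>\<omega>. G (map (\<lambda>m. J m \<omega>) [0..<k]))" for k
    unfolding I_def G_def u_along_def
    by (auto intro!: arg_cong[where f = "\<lambda>u. sqnorm n (wdiff (T j u) u)"] spdhg_u_cong)
  show "integrable M (I k)" for k
    unfolding I_eq by (rule integral_fun_J_prefix(1))
  have "(\<integral>\<omega>. I k \<omega> \<partial>M) \<le> expected_residual x0 k" for k
    unfolding I_eq integral_fun_J_prefix(2) unfolding expected_residual_def G_def
    using j by (intro sum_mono) (auto simp: mult.commute sqnorm_nonneg prod_list_p_nonneg
        intro!: mult_left_mono member_le_sum)
  moreover have "(\<integral>\<omega>. I k \<omega> \<partial>M) \<ge> 0" for k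
    unfolding I_def by (simp add: sqnorm_nonneg)
  ultimately show "summable (\<lambda>k. \<integral>\<omega>. I k \<omega> \<partial>M)"
    by (intro summable_comparison_test'[OF summable_expected_residual]) auto
qed

lemma residual_tendsto_zero:
  fixes M :: "'a measure" and J :: "nat \<Rightarrow> 'a \<Rightarrow> nat" and x0 :: 'x
  assumes process: "index_process M J n p" and j: "j \<in> {1..n}"
  defines "w \<equiv> \<lambda>k \<omega>. wdiff (T j (spdhg_u p \<tau> \<sigma> g f Y A x0 (\<lambda>m. J m \<omega>) k))
                          (spdhg_u p \<tau> \<sigma> g f Y A x0 (\<lambda>m. J m \<omega>) k)"
  shows "(\<lambda>k. \<integral>\<omega>. sqnorm n (w k \<omega>) \<partial>M) \<longlonglongrightarrow> 0"
    and "AE \<omega> in M. (\<lambda>k. fst (w k \<omega>)) \<longlonglongrightarrow> 0 \<and> (\<forall>i\<in>{1..n}. (\<lambda>k. snd (w k \<omega>) i) \<longlonglongrightarrow> 0)"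
proof -
  have int: "integrable M (\<lambda>\<omega>. sqnorm n (w k \<omega>))" for k
    unfolding w_def by (rule summable_integral_residual(1)[OF process j])
  have sum: "summable (\<lambda>k. \<integral>\<omega>. sqnorm n (w k \<omega>) \<partial>M)"
    unfolding w_def by (rule summable_integral_residual(2)[OF process j])
  show "(\<lambda>k. \<integral>\<omega>. sqnorm n (w k \<omega>) \<partial>M) \<longlonglongrightarrow> 0"
    using sum by (rule summable_LIMSEQ_zero)
  have "AE \<omega> in M. (\<lambda>k. sqnorm n (w k \<omega>)) \<longlonglongrightarrow> 0"
    using int sqnorm_nonneg sum by (rule AE_tendsto_zero_of_summable_integral)
  then show "AE \<omega> in M. (\<lambda>k. fst (w k \<omega>)) \<longlonglongrightarrow> 0 \<and> (\<forall>i\<in>{1..n}. (\<lambda>k. snd (w k \<omega>) i) \<longlonglongrightarrow> 0)"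
    by eventually_elim (auto intro: tendsto_zero_components_of_sqnorm)
qed

end

theorem mainTheorem6:
  fixes M :: "'a measure" and J :: "nat \<Rightarrow> 'a \<Rightarrow> nat"
    and n :: nat and p \<sigma> :: "nat \<Rightarrow> real" and \<tau> :: real
    and g :: "'x::euclidean_space \<Rightarrow> ereal" and f :: "nat \<Rightarrow> 'y::euclidean_space \<Rightarrow> ereal"
    and Y :: "nat \<Rightarrow> 'y set" and A :: "nat \<Rightarrow> 'x \<Rightarrow> 'y" and x0 :: 'x
  assumes Y_sub: "\<forall>i\<in>{1..n}. subspace (Y i)"
    and A_lin: "\<forall>i\<in>{1..n}. linear (A i) \<and> (\<forall>x. A i x \<in> Y i)"
    and g_pcl: "econvex_on UNIV g \<and> eproper_on UNIV g \<and> elsc_on UNIV g"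
    and f_pcl: "\<forall>i\<in>{1..n}. econvex_on (Y i) (f i) \<and> eproper_on (Y i) (f i) \<and> elsc_on (Y i) (f i)"
    and p_pos: "\<forall>i\<in>{1..n}. p i > 0" and p_sum: "(\<Sum>i=1..n. p i) = 1"
    and tau_pos: "\<tau> > 0" and sigma_pos: "\<forall>i\<in>{1..n}. \<sigma> i > 0"
    and saddle: "\<exists>xh yh. saddle_point n Y A f g xh yh"
    and steps: "\<forall>i\<in>{1..n}. \<tau> * \<sigma> i * (onorm (A i))\<^sup>2 < p i"
    and M_prob: "prob_space M"
    and J_meas: "\<forall>k. J k \<in> measurable M (count_space UNIV)"
    and J_indep: "prob_space.indep_vars M (\<lambda>_. count_space UNIV) J UNIV"
    and J_distr: "\<forall>k. \<forall>i\<in>{1..n}. measure M {\<omega> \<in> space M. J k \<omega> = i} = p i"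
  shows "\<forall>j\<in>{1..n}.
     (let u = (\<lambda>k \<omega>. (fst (spdhg p \<tau> \<sigma> g f Y A x0 (\<lambda>m. J m \<omega>) (Suc k)),
                        fst (snd (spdhg p \<tau> \<sigma> g f Y A x0 (\<lambda>m. J m \<omega>) k))))
      in (\<lambda>k. \<integral>\<omega>. sqnorm n (wdiff (Top n p \<tau> \<sigma> g f Y A j (u k \<omega>)) (u k \<omega>)) \<partial>M) \<longlonglongrightarrow> 0
       \<and> (AE \<omega> in M. (\<lambda>k. fst (wdiff (Top n p \<tau> \<sigma> g f Y A j (u k \<omega>)) (u k \<omega>))) \<longlonglongrightarrow> 0
                     \<and> (\<forall>i\<in>{1..n}. (\<lambda>k. snd (wdiff (Top n p \<tau> \<sigma> g f Y A j (u k \<omega>)) (u k \<omega>)) i) \<longlonglongrightarrow> 0)))"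
proof -
  interpret spdhg_setting n p \<sigma> \<tau> g f Y A
    using Y_sub A_lin g_pcl f_pcl p_pos p_sum tau_pos sigma_pos steps
    by (simp add: spdhg_setting_def)
  obtain xh yh where "saddle_point n Y A f g xh yh"
    using saddle by blast
  then interpret spdhg_saddle n p \<sigma> \<tau> g f Y A xh yh
    by unfold_locales
  have process: "index_process M J n p"
    using M_prob J_meas J_indep J_distr p_sum
    by (simp add: index_process_def index_process_axioms_def)
  show ?thesis
    unfolding Let_def spdhg_u_def[symmetric] using residual_tendsto_zero[OF process] by blast
qed

end
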